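(* Let $G,G'$ be compact Lie groups with Lie algebras $\mathfrak{g},\mathfrak{g}'$, and let $V,W\in\mathrm{Irr}(G,\mathbb{C})$, $V',W'\in\mathrm{Irr}(G',\mathbb{C})$. Consider $V\otimes V'$, $W\otimes W'$ as irreducible complex $G\times G'$-modules. Then: (i) if $a_{V,W}\neq0$ or $a_{V',W'}\neq0$, then $a_{V\otimes V',W\otimes W'}\ne0$; (ii) if $b_V\ne0$ and $b_{V'}\ne0$, then $b_{V\otimes V'}\neq0$; (iii) if $V$ is of real type with $b_V\ne0$ and $V'$ is of quaternionic type with $c_{V'}\neq0$ (or vice versa, with the roles of $(G,V)$ and $(G',V')$ exchanged), then $c_{V\otimes V'}\neq 0$.
   Context: For a compact Lie group $H$ with Lie algebra $\mathfrak{h}$: $\mathrm{Irr}(H,\mathbb{C})$ is a set of representatives of isomorphism classes of irreducible complex $H$-modules with representations $\rho_V$; $V$ is of real (resp. quaternionic) type if there is a conjugate-linear $H$-map $J:V\to V$ with $J^2=\mathrm{Id}$ (resp. $-\mathrm{Id}$), of complex type otherwise. $\mathrm{Sym}^2(\mathfrak{h})$ is the real span of $Y\cdot Z=\frac12(Y\otimes Z+Z\otimes Y)$; $D_V:\mathrm{Sym}^2(\mathfrak{h})\to\mathrm{End}(V)$ is linear with $D_V(Y\cdot Z)=-\frac12((\rho_V)_*(Y)(\rho_V)_*(Z)+(\rho_V)_*(Z)(\rho_V)_*(Y))$; $p_V(s)=\det(D_V(s)-X\mathrm{Id})$; $a_{V,W}(s)=\mathrm{res}(p_V(s),p_W(s))$,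 $b_V(s)=\mathrm{res}(p_V(s),p_V(s)')$, $c_V(s)=\mathrm{res}(p_V(s),p_V(s)'')$ ($\mathrm{res}$ = resultant, derivatives in $X$); "$\ne0$" means not identically zero on $\mathrm{Sym}^2(\mathfrak{h})$. The group $G\times G'$ acts on $V\otimes V'$ by $\rho_V(x)\otimes\rho_{V'}(x')$; its Lie algebra is $\mathfrak{g}\oplus\mathfrak{g}'$. *)

theory Defs
  imports "HOL-Analysis.Analysis" "Subresultants.Resultant_Prelim"
begin

primrec mpow :: "complex^'n^'n \<Rightarrow> nat \<Rightarrow> complex^'n^'n" where
  "mpow A 0 = Finite_Cartesian_Product.mat 1"
| "mpow A (Suc k) = A ** mpow A k"

definition mexp :: "complex^'n^'n \<Rightarrow> complex^'n^'n" where
  "mexp A = (\<Sum>k. (1 / fact k) *\<^sub>R mpow A k)"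

text \<open>A compact Lie group, realised (up to isomorphism, by Peter--Weyl and Cartan's
  closed subgroup theorem) as a compact subgroup of GL(n, C).\<close>

definition compact_lie_group :: "(complex^'n^'n) set \<Rightarrow> bool" where
  "compact_lie_group G \<longleftrightarrow> compact G \<and> Finite_Cartesian_Product.mat 1 \<in> G \<and>
     (\<forall>g\<in>G. invertible g \<and> matrix_inv g \<in> G) \<and>
     (\<forall>g\<in>G. \<forall>h\<in>G. g ** h \<in> G)"

definition lie_alg :: "(complex^'n^'n) set \<Rightarrow> (complex^'n^'n) set" where
  "lie_alg G = {X. \<forall>t::real. mexp (t *\<^sub>R X) \<in> G}"

definition is_rep :: "(complex^'n^'n) set \<Rightarrow> (complex^'n^'n \<Rightarrow> complex^'m^'m) \<Rightarrow> bool" where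
  "is_rep G \<rho> \<longleftrightarrow> continuous_on G \<rho> \<and> (\<forall>g\<in>G. invertible (\<rho> g)) \<and>
     (\<forall>g\<in>G. \<forall>h\<in>G. \<rho> (g ** h) = \<rho> g ** \<rho> h)"

definition csubspace :: "(complex^'m) set \<Rightarrow> bool" where
  "csubspace U \<longleftrightarrow> 0 \<in> U \<and> (\<forall>x\<in>U. \<forall>y\<in>U. x + y \<in> U) \<and> (\<forall>c. \<forall>x\<in>U. c *s x \<in> U)"

definition irreducible_rep :: "(complex^'n^'n) set \<Rightarrow> (complex^'n^'n \<Rightarrow> complex^'m^'m) \<Rightarrow> bool" where
  "irreducible_rep G \<rho> \<longleftrightarrow> is_rep G \<rho> \<and>
     (\<forall>U. csubspace U \<and> (\<forall>g\<in>G. \<forall>v\<in>U. \<rho> g *v v \<in> U) \<longrightarrow> U = {0} \<or> U = UNIV)"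

definition conj_linear_Gmap :: "(complex^'n^'n) set \<Rightarrow> (complex^'n^'n \<Rightarrow> complex^'m^'m)
     \<Rightarrow> (complex^'m \<Rightarrow> complex^'m) \<Rightarrow> bool" where
  "conj_linear_Gmap G \<rho> J \<longleftrightarrow> (\<forall>x y. J (x + y) = J x + J y) \<and>
     (\<forall>c x. J (c *s x) = cnj c *s J x) \<and> (\<forall>g\<in>G. \<forall>v. J (\<rho> g *v v) = \<rho> g *v J v)"

definition real_type :: "(complex^'n^'n) set \<Rightarrow> (complex^'n^'n \<Rightarrow> complex^'m^'m) \<Rightarrow> bool" where
  "real_type G \<rho> \<longleftrightarrow> (\<exists>J. conj_linear_Gmap G \<rho> J \<and> (\<forall>v. J (J v) = v))"

definition quaternionic_type :: "(complex^'n^'n) set \<Rightarrow> (complex^'n^'n \<Rightarrow> complex^'m^'m) \<Rightarrow> bool" where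
  "quaternionic_type G \<rho> \<longleftrightarrow> (\<exists>J. conj_linear_Gmap G \<rho> J \<and> (\<forall>v. J (J v) = - v))"

definition drep :: "(complex^'n^'n \<Rightarrow> complex^'m^'m) \<Rightarrow> complex^'n^'n \<Rightarrow> complex^'m^'m" where
  "drep \<rho> X = vector_derivative (\<lambda>t::real. \<rho> (mexp (t *\<^sub>R X))) (at 0)"

text \<open>An element of Sym^2(h) is a finite sum of symmetric products Y.Z with Y, Z in h
  (real scalars being absorbed into Y); it is represented by the list of the pairs (Y, Z).
  D_V is extended linearly.\<close>

definition D_op :: "(complex^'n^'n \<Rightarrow> complex^'m^'m) \<Rightarrow> ((complex^'n^'n) \<times> (complex^'n^'n)) list
     \<Rightarrow> complex^'m^'m" where
  "D_op \<rho> s = (\<Sum>(Y, Z) \<leftarrow> s. (- 1 / 2 :: real) *\<^sub>R (drep \<rho> Y ** drep \<rho> Z + drep \<rho> Z ** drep \<rho> Y))"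

definition sym2_elem :: "(complex^'n^'n) set \<Rightarrow> ((complex^'n^'n) \<times> (complex^'n^'n)) list \<Rightarrow> bool" where
  "sym2_elem G s \<longleftrightarrow> set s \<subseteq> lie_alg G \<times> lie_alg G"

definition char_pol :: "complex^'m^'m \<Rightarrow> complex poly" where
  "char_pol A = Determinants.det (\<chi> i j. [:A $ i $ j:] - (if i = j then [:0, 1:] else 0))"

definition p_V :: "(complex^'n^'n \<Rightarrow> complex^'m^'m) \<Rightarrow> ((complex^'n^'n) \<times> (complex^'n^'n)) list
     \<Rightarrow> complex poly" where
  "p_V \<rho> s = char_pol (D_op \<rho> s)"

text \<open>"a_{V,W} \<noteq> 0" etc.: not identically zero on Sym^2(h).\<close>

definition a_nonzero :: "(complex^'n^'n) set \<Rightarrow> (complex^'n^'n \<Rightarrow> complex^'m^'m)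
     \<Rightarrow> (complex^'n^'n \<Rightarrow> complex^'k^'k) \<Rightarrow> bool" where
  "a_nonzero G \<rho>V \<rho>W \<longleftrightarrow> (\<exists>s. sym2_elem G s \<and> resultant (p_V \<rho>V s) (p_V \<rho>W s) \<noteq> 0)"

definition b_nonzero :: "(complex^'n^'n) set \<Rightarrow> (complex^'n^'n \<Rightarrow> complex^'m^'m) \<Rightarrow> bool" where
  "b_nonzero G \<rho>V \<longleftrightarrow> (\<exists>s. sym2_elem G s \<and> resultant (p_V \<rho>V s) (pderiv (p_V \<rho>V s)) \<noteq> 0)"

definition c_nonzero :: "(complex^'n^'n) set \<Rightarrow> (complex^'n^'n \<Rightarrow> complex^'m^'m) \<Rightarrow> bool" where
  "c_nonzero G \<rho>V \<longleftrightarrow>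
     (\<exists>s. sym2_elem G s \<and> resultant (p_V \<rho>V s) (pderiv (pderiv (p_V \<rho>V s))) \<noteq> 0)"

definition blockdiag :: "complex^'n^'n \<Rightarrow> complex^'p^'p \<Rightarrow> complex^('n + 'p)^('n + 'p)" where
  "blockdiag A B = (\<chi> i j. case (i, j) of (Inl a, Inl b) \<Rightarrow> A $ a $ b
                                       | (Inr a, Inr b) \<Rightarrow> B $ a $ b
                                       | _ \<Rightarrow> 0)"

definition prod_group :: "(complex^'n^'n) set \<Rightarrow> (complex^'p^'p) set \<Rightarrow> (complex^('n + 'p)^('n + 'p)) set" where
  "prod_group G G' = {blockdiag g g' | g g'. g \<in> G \<and> g' \<in> G'}"

definition blk1 :: "complex^('n::finite + 'p::finite)^('n + 'p) \<Rightarrow> complex^'n^'n" where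
  "blk1 h = (\<chi> a b. h $ Inl a $ Inl b)"

definition blk2 :: "complex^('n::finite + 'p::finite)^('n + 'p) \<Rightarrow> complex^'p^'p" where
  "blk2 h = (\<chi> a b. h $ Inr a $ Inr b)"

text \<open>Kronecker product: the matrix of A tensor B on C^m tensor C^m' = C^(m x m').\<close>

definition kron :: "complex^'m^'m \<Rightarrow> complex^'q^'q \<Rightarrow> complex^('m \<times> 'q)^('m \<times> 'q)" where
  "kron A B = (\<chi> p q. A $ fst p $ fst q * B $ snd p $ snd q)"

definition tensor_rep :: "(complex^'n^'n \<Rightarrow> complex^'m^'m) \<Rightarrow> (complex^'p^'p \<Rightarrow> complex^'q^'q)
     \<Rightarrow> complex^('n + 'p)^('n + 'p) \<Rightarrow> complex^('m \<times> 'q)^('m \<times> 'q)" where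
  "tensor_rep \<rho> \<rho>' h = kron (\<rho> (blk1 h)) (\<rho>' (blk2 h))"

end

theory Submission
  imports Defs "Jordan_Normal_Form.Schur_Decomposition" "Subresultants.Subresultant_Gcd"
    "HOL-Computational_Algebra.Field_as_Ring"
begin

(* For s in Sym^2(g) and s' in Sym^2(g'), the element c s + c' s' of Sym^2(g + g') acts on
  V tensor V' as c D_V(s) tensor 1 + c' 1 tensor D_V'(s'). Triangularising both factors shows
  that its eigenvalues are c x_a + c' y_b, where x_a and y_b are the eigenvalues of D_V(s) and
  D_V'(s'). Over C a resultant res(p, q) vanishes iff p and q have a common root, so b_V(s) <> 0
  says that all x_a are simple, and c_V(s) <> 0 that every x_a is double, or simple with
  sum_b 1/(x_b - x_a) <> 0.
  Taking c' = 0 (or c = 0) gives (i). For (ii) and (iii) take c = 1 and c' > 0 small: then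
  x_a + c' y_b = x_a' + c' y_b' forces a = a', so the multiplicities are those of the y_b, and
  the sum for the eigenvalue x_a + c' y_b is dominated by (1/c') sum_b' 1/(y_b' - y_b). *)

hide_const (open) Matrix.mat Determinant.det
no_notation Matrix.vec_index (infixl "$" 100)
no_notation Matrix.scalar_prod (infix "\<bullet>" 70)
hide_fact (open) Matrix.vec_eq_iff Matrix.mat_def Determinant.det_def

section \<open>The matrix exponential\<close>

definition entry_norm :: "complex^'n^'n \<Rightarrow> real" where
  "entry_norm A = (\<Sum>i\<in>UNIV. \<Sum>j\<in>UNIV. norm (A $ i $ j))"

lemma entry_norm_nonneg: "0 \<le> entry_norm A"
  unfolding entry_norm_def by (intro sum_nonneg) auto

lemma row_norm_le_entry_norm: "(\<Sum>l\<in>UNIV. norm (A $ i $ l)) \<le> entry_norm A"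
  unfolding entry_norm_def
  by (rule member_le_sum[of i UNIV "\<lambda>i. \<Sum>j\<in>UNIV. norm (A $ i $ j)", simplified]) (auto intro: sum_nonneg)

lemma norm_mpow_nth_le: "norm (mpow A k $ i $ j) \<le> entry_norm A ^ k"
proof (induction k arbitrary: i j)
  case 0
  then show ?case by (simp add: mat_def)
next
  case (Suc k)
  have "norm (mpow A (Suc k) $ i $ j) = norm (\<Sum>l\<in>UNIV. A $ i $ l * mpow A k $ l $ j)"
    by (simp add: matrix_matrix_mult_def)
  also have "\<dots> \<le> (\<Sum>l\<in>UNIV. norm (A $ i $ l) * entry_norm A ^ k)"
    by (rule order_trans[OF norm_sum sum_mono]) (auto simp: norm_mult intro: mult_left_mono Suc.IH)
  also have "\<dots> = (\<Sum>l\<in>UNIV. norm (A $ i $ l)) * entry_norm A ^ k"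
    by (simp add: sum_distrib_right)
  also have "\<dots> \<le> entry_norm A * entry_norm A ^ k"
    by (rule mult_right_mono[OF row_norm_le_entry_norm]) (simp add: entry_norm_nonneg)
  finally show ?case by simp
qed

lemma summable_norm_mpow_nth_powser:
  "summable (\<lambda>k. norm (mpow A k $ i $ j / of_real (fact k) * (y::complex) ^ k))"
proof (rule summable_comparison_test[OF _ summable_exp[of "entry_norm A * norm y"]], intro exI allI impI)
  fix k :: nat
  have "norm (norm (mpow A k $ i $ j / of_real (fact k) * y ^ k)) = norm (mpow A k $ i $ j) * norm y ^ k / fact k"
    by (simp add: norm_mult norm_divide norm_power)
  also have "\<dots> \<le> entry_norm A ^ k * norm y ^ k / fact k"
    by (intro divide_right_mono mult_right_mono norm_mpow_nth_le) auto
  also have "\<dots> = inverse (fact k) * (entry_norm A * norm y) ^ k"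
    by (simp add: field_simps)
  finally show "norm (norm (mpow A k $ i $ j / of_real (fact k) * y ^ k)) \<le> inverse (fact k) * (entry_norm A * norm y) ^ k" .
qed

lemma summable_norm_mexp_series: "summable (\<lambda>k. norm ((1 / fact k) *\<^sub>R (mpow A k $ i $ j)))"
  using summable_norm_mpow_nth_powser[of A i j 1] by (simp add: scaleR_conv_of_real field_simps)

lemma sums_mat_entrywise:
  fixes f :: "nat \<Rightarrow> complex^'n^'m"
  assumes "\<And>i j. (\<lambda>k. f k $ i $ j) sums (L $ i $ j)"
  shows "f sums L"
  unfolding sums_def
proof (intro vec_tendstoI)
  show "((\<lambda>n. (\<Sum>k<n. f k) $ i $ j) \<longlongrightarrow> L $ i $ j) sequentially" for i j
    using assms[of i j] by (simp add: sums_def)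
qed

lemma mexp_nth: "mexp A $ i $ j = (\<Sum>k. (1 / fact k) *\<^sub>R (mpow A k $ i $ j))"
proof -
  have "(\<lambda>k. (1 / fact k) *\<^sub>R mpow A k) sums (\<chi> i j. \<Sum>k. (1 / fact k) *\<^sub>R (mpow A k $ i $ j))"
    by (rule sums_mat_entrywise) (auto intro: summable_norm_cancel[OF summable_norm_mexp_series])
  then show ?thesis
    unfolding mexp_def by (simp add: sums_unique[symmetric])
qed

lemma mpow_add: "mpow A (a + b) = mpow A a ** mpow A b"
  by (induction a) (auto simp: matrix_mul_assoc)

lemma mpow_scaleR: "mpow (c *\<^sub>R A) k = (c ^ k) *\<^sub>R mpow A k"
  by (induction k) (auto simp: scalar_matrix_assoc[symmetric] matrix_scalar_ac)

lemma mexp_scaleR_nth: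
  "mexp (t *\<^sub>R A) $ i $ j = (\<Sum>k. mpow A k $ i $ j / of_real (fact k) * complex_of_real t ^ k)"
  unfolding mexp_nth mpow_scaleR vector_scaleR_component by (simp add: scaleR_conv_of_real field_simps)

lemma mexp_zero: "mexp (0::complex^'n^'n) = mat 1"
proof -
  have "mexp (0 *\<^sub>R (0::complex^'n^'n)) $ i $ j = mat 1 $ i $ j" for i j
    unfolding mexp_scaleR_nth of_real_0 powser_zero by (simp add: mat_def)
  then show ?thesis by (simp add: vec_eq_iff)
qed

lemma continuous_on_mexp_scaleR: "continuous_on UNIV (\<lambda>t::real. mexp (t *\<^sub>R A))"
proof -
  have "summable (\<lambda>k. mpow A k $ i $ j / of_real (fact k) * y ^ k)" for y i j
    by (rule summable_norm_cancel[OF summable_norm_mpow_nth_powser])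
  then have "isCont (\<lambda>t. mexp (t *\<^sub>R A) $ i $ j) t" for i j t
    unfolding mexp_scaleR_nth
    by (intro isCont_o2[where f = complex_of_real, OF _ isCont_powser_converges_everywhere]) auto
  then have "continuous_on UNIV (\<lambda>t. \<chi> i j. mexp (t *\<^sub>R A) $ i $ j)"
    by (intro continuous_on_vec_lambda continuous_at_imp_continuous_on ballI)
  then show ?thesis by simp
qed

lemma mexp_Cauchy_product_term:
  "(\<Sum>l\<in>UNIV. \<Sum>p\<le>k. ((1 / fact p) *\<^sub>R mpow (s *\<^sub>R A) p $ i $ l) * ((1 / fact (k - p)) *\<^sub>R mpow (t *\<^sub>R A) (k - p) $ l $ j))
    = (1 / fact k) *\<^sub>R (mpow ((s + t) *\<^sub>R A) k $ i $ j)"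
proof -
  have "(\<Sum>l\<in>UNIV. ((1 / fact p) *\<^sub>R mpow (s *\<^sub>R A) p $ i $ l) * ((1 / fact (k - p)) *\<^sub>R mpow (t *\<^sub>R A) (k - p) $ l $ j))
      = ((s ^ p / fact p) * (t ^ (k - p) / fact (k - p))) *\<^sub>R (mpow A k $ i $ j)" if "p \<le> k" for p
  proof -
    have "(\<Sum>l\<in>UNIV. ((1 / fact p) *\<^sub>R mpow (s *\<^sub>R A) p $ i $ l) * ((1 / fact (k - p)) *\<^sub>R mpow (t *\<^sub>R A) (k - p) $ l $ j))
        = ((s ^ p / fact p) * (t ^ (k - p) / fact (k - p))) *\<^sub>R (mpow A p ** mpow A (k - p)) $ i $ j"
      unfolding mpow_scaleR vector_scaleR_component
      by (simp add: matrix_matrix_mult_def scaleR_conv_of_real sum_distrib_left algebra_simps)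
    then show ?thesis
      using that by (simp flip: mpow_add)
  qed
  then have "(\<Sum>l\<in>UNIV. \<Sum>p\<le>k. ((1 / fact p) *\<^sub>R mpow (s *\<^sub>R A) p $ i $ l) * ((1 / fact (k - p)) *\<^sub>R mpow (t *\<^sub>R A) (k - p) $ l $ j))
      = (\<Sum>p\<le>k. ((s ^ p / fact p) * (t ^ (k - p) / fact (k - p))) *\<^sub>R (mpow A k $ i $ j))"
    by (subst sum.swap) (rule sum.cong, auto)
  also have "\<dots> = (\<Sum>p\<le>k. (s ^ p / fact p) * (t ^ (k - p) / fact (k - p))) *\<^sub>R (mpow A k $ i $ j)"
    by (simp add: scaleR_sum_left)
  also have "\<dots> = ((s + t) ^ k / fact k) *\<^sub>R (mpow A k $ i $ j)"
    using exp_series_add_commuting[of s t k] by (simp add: divide_inverse mult_ac)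
  also have "\<dots> = (1 / fact k) *\<^sub>R (mpow ((s + t) *\<^sub>R A) k $ i $ j)"
    unfolding mpow_scaleR by simp
  finally show ?thesis .
qed

lemma mexp_add: "mexp ((s + t) *\<^sub>R A) = mexp (s *\<^sub>R A) ** mexp (t *\<^sub>R A)"
proof -
  have "(mexp (s *\<^sub>R A) ** mexp (t *\<^sub>R A)) $ i $ j = mexp ((s + t) *\<^sub>R A) $ i $ j" for i j
  proof -
    define a where "a l k = (1 / fact k) *\<^sub>R (mpow (s *\<^sub>R A) k $ i $ l)" for l k
    define b where "b l k = (1 / fact k) *\<^sub>R (mpow (t *\<^sub>R A) k $ l $ j)" for l k
    have sa: "summable (\<lambda>k. norm (a l k))" and sb: "summable (\<lambda>k. norm (b l k))" for l
      unfolding a_def b_def by (rule summable_norm_mexp_series)+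
    have "(mexp (s *\<^sub>R A) ** mexp (t *\<^sub>R A)) $ i $ j = (\<Sum>l\<in>UNIV. (\<Sum>k. a l k) * (\<Sum>k. b l k))"
      by (simp add: matrix_matrix_mult_def mexp_nth a_def b_def)
    also have "\<dots> = (\<Sum>l\<in>UNIV. \<Sum>k. \<Sum>p\<le>k. a l p * b l (k - p))"
      using Cauchy_product[OF sa sb] by simp
    also have "\<dots> = (\<Sum>k. \<Sum>l\<in>UNIV. \<Sum>p\<le>k. a l p * b l (k - p))"
      using Cauchy_product_sums[OF sa sb] by (intro suminf_sum[symmetric]) (auto simp: summable_def)
    also have "\<dots> = mexp ((s + t) *\<^sub>R A) $ i $ j"
      unfolding a_def b_def mexp_Cauchy_product_term mexp_nth ..
    finally show ?thesis .
  qed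
  then show ?thesis by (simp add: vec_eq_iff)
qed

section \<open>Continuous one-parameter groups are differentiable\<close>

lemma tendsto_det:
  fixes f :: "'a \<Rightarrow> complex^'n^'n"
  assumes "(f \<longlongrightarrow> A) F"
  shows "((\<lambda>x. det (f x)) \<longlongrightarrow> det A) F"
  unfolding det_def by (intro tendsto_intros tendsto_vec_nth assms)

lemma bounded_linear_matrix_mult_left: "bounded_linear (\<lambda>B::complex^'p^'n. (N::complex^'n^'m) ** B)"
proof -
  have "linear (\<lambda>B::complex^'p^'n. N ** B)"
    by (rule linearI) (simp_all add: matrix_add_ldistrib matrix_scalar_ac scalar_matrix_assoc[symmetric])
  then show ?thesis by (simp add: linear_conv_bounded_linear)
qed

lemma bounded_linear_matrix_mult_right: "bounded_linear (\<lambda>B::complex^'n^'m. B ** (N::complex^'p^'n))"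
proof -
  have "linear (\<lambda>B::complex^'n^'m. B ** N)"
    by (rule linearI)
      (simp_all add: matrix_matrix_mult_def vec_eq_iff sum.distrib algebra_simps scaleR_sum_right)
  then show ?thesis by (simp add: linear_conv_bounded_linear)
qed

lemma integral_invertible_near_identity:
  fixes \<phi> :: "real \<Rightarrow> complex^'m^'m"
  assumes cont: "continuous_on UNIV \<phi>" and \<phi>0: "\<phi> 0 = mat 1"
  shows "\<exists>h>0. \<exists>N. integral {0..h} \<phi> ** N = mat 1"
proof -
  define F where "F x = integral {0..x} \<phi>" for x
  have F0: "F 0 = 0"
    by (simp add: F_def)
  have "(F has_vector_derivative \<phi> 0) (at 0 within {0..1})"
    unfolding F_def by (rule integral_has_vector_derivative) (auto intro: continuous_on_subset[OF cont])
  then have "(F has_vector_derivative \<phi> 0) (at_right 0)"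
    by (simp add: at_within_Icc_at_right)
  then have "((\<lambda>y. (1 / norm (y - 0)) *\<^sub>R (F y - (F 0 + (y - 0) *\<^sub>R \<phi> 0))) \<longlongrightarrow> 0) (at_right 0)"
    unfolding has_vector_derivative_def has_derivative_within by simp
  then have "((\<lambda>y. (1 / y) *\<^sub>R F y - \<phi> 0) \<longlongrightarrow> 0) (at_right 0)"
  proof (rule Lim_transform_eventually)
    show "\<forall>\<^sub>F y in at_right 0. (1 / norm (y - 0)) *\<^sub>R (F y - (F 0 + (y - 0) *\<^sub>R \<phi> 0)) = (1 / y) *\<^sub>R F y - \<phi> 0"
      by (rule eventually_at_rightI[of 0 1]) (auto simp: F0 scaleR_right_diff_distrib)
  qed
  then have "((\<lambda>y. (1 / y) *\<^sub>R F y) \<longlongrightarrow> mat 1) (at_right 0)"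
    using \<phi>0 by (simp add: LIM_zero_iff)
  then have "((\<lambda>y. det ((1 / y) *\<^sub>R F y)) \<longlongrightarrow> det (mat 1 :: complex^'m^'m)) (at_right 0)"
    by (rule tendsto_det)
  then have det_nonzero: "\<forall>\<^sub>F y in at_right 0. det ((1 / y) *\<^sub>R F y) \<noteq> 0"
    by (rule tendsto_imp_eventually_ne) simp
  have pos: "\<forall>\<^sub>F y in at_right (0::real). 0 < y"
    by (simp add: eventually_at_right_less)
  obtain h where h: "0 < h" "det ((1 / h) *\<^sub>R F h) \<noteq> 0"
    using eventually_happens'[OF _ eventually_conj[OF pos det_nonzero]] by auto
  then obtain N where "((1 / h) *\<^sub>R F h) ** N = mat 1"
    unfolding invertible_det_nz[symmetric] invertible_def by blast
  then have "integral {0..h} \<phi> ** ((1 / h) *\<^sub>R N) = mat 1"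
    by (simp add: F_def matrix_scalar_ac scalar_matrix_assoc)
  then show ?thesis
    using h(1) by blast
qed

lemma one_parameter_group_mult_integral:
  fixes \<phi> :: "real \<Rightarrow> complex^'m^'m"
  assumes cont: "continuous_on UNIV \<phi>" and hom: "\<And>s t. \<phi> (s + t) = \<phi> s ** \<phi> t"
  shows "\<phi> t ** integral {0..h} \<phi> = integral {t..t + h} \<phi>"
proof -
  have integrable: "\<phi> integrable_on {0..h}"
    by (rule integrable_continuous_real) (rule continuous_on_subset[OF cont], simp)
  have "\<phi> t ** integral {0..h} \<phi> = integral {0..h} (\<lambda>u. \<phi> t ** \<phi> u)"
    using integral_linear[OF integrable bounded_linear_matrix_mult_left[of "\<phi> t"]] by (simp add: o_def)
  also have "\<dots> = integral {0..h} (\<phi> \<circ> (+) t)"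
    by (simp add: hom o_def)
  also have "\<dots> = integral {0 + t..h + t} \<phi>"
    by (rule integral_shift_Icc_real)
  finally show ?thesis
    by (simp add: add.commute)
qed

text \<open>By the group law, \<phi> t times the invertible matrix integral {0..h} \<phi> is the integral of \<phi>
  over [t, t + h], which is differentiable in t.\<close>

lemma one_parameter_group_has_vector_derivative:
  fixes \<phi> :: "real \<Rightarrow> complex^'m^'m"
  assumes cont: "continuous_on UNIV \<phi>" and \<phi>0: "\<phi> 0 = mat 1"
    and hom: "\<And>s t. \<phi> (s + t) = \<phi> s ** \<phi> t"
  shows "\<exists>D. (\<phi> has_vector_derivative D) (at 0)"
proof -
  obtain h N where h: "0 < h" and MN: "integral {0..h} \<phi> ** N = mat 1"
    using integral_invertible_near_identity[OF cont \<phi>0] by blast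
  define F where "F x = integral {-1..x} \<phi>" for x
  have integrable: "\<phi> integrable_on {a..b}" for a b
    by (rule integrable_continuous_real) (rule continuous_on_subset[OF cont], simp)
  have F_deriv: "(F has_vector_derivative \<phi> x) (at x)" if "-1 < x" for x
  proof -
    have "(F has_vector_derivative \<phi> x) (at x within {-1..x + 1})"
      unfolding F_def
      by (rule integral_has_vector_derivative) (use that in \<open>auto intro: continuous_on_subset[OF cont]\<close>)
    moreover have "at x within {-1..x + 1} = at x"
      by (rule at_within_interior) (use that in simp)
    ultimately show ?thesis by simp
  qed
  have shift: "\<phi> t ** integral {0..h} \<phi> = F (t + h) - F t" if "-1 \<le> t" for t
  proof -
    have "integral {-1..t} \<phi> + integral {t..t + h} \<phi> = integral {-1..t + h} \<phi>"
      using that h by (intro Henstock_Kurzweil_Integration.integral_combine integrable) auto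
    then have "integral {t..t + h} \<phi> = F (t + h) - F t"
      unfolding F_def by (simp add: algebra_simps)
    then show ?thesis
      by (simp add: one_parameter_group_mult_integral[OF cont hom])
  qed
  have \<phi>_eq: "\<phi> t = (F (t + h) - F t) ** N" if "t \<in> {-1<..<1}" for t
  proof -
    have "\<phi> t = (\<phi> t ** integral {0..h} \<phi>) ** N"
      using MN by (simp flip: matrix_mul_assoc)
    then show ?thesis
      using shift that by simp
  qed
  have "((\<lambda>t. F (t + h)) has_vector_derivative \<phi> h) (at 0)"
  proof -
    have "((F \<circ> (\<lambda>t. t + h)) has_vector_derivative (1 *\<^sub>R \<phi> h)) (at 0)"
      by (rule vector_diff_chain_at) (use h in \<open>auto intro!: derivative_eq_intros F_deriv\<close>)
    then show ?thesis by (simp add: o_def)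
  qed
  then have "((\<lambda>t. (F (t + h) - F t) ** N) has_vector_derivative ((\<phi> h - \<phi> 0) ** N)) (at 0)"
    by (intro bounded_linear.has_vector_derivative[OF bounded_linear_matrix_mult_right]
        has_vector_derivative_diff F_deriv) auto
  then have "(\<phi> has_vector_derivative ((\<phi> h - \<phi> 0) ** N)) (at 0)"
    by (rule has_vector_derivative_transform_within_open[of _ _ _ "{-1<..<1}"]) (auto simp: \<phi>_eq)
  then show ?thesis by blast
qed

lemma is_rep_one:
  assumes "is_rep G \<rho>" "mat 1 \<in> G"
  shows "\<rho> (mat 1) = mat 1"
proof -
  have idem: "\<rho> (mat 1) = \<rho> (mat 1) ** \<rho> (mat 1)"
    using assms unfolding is_rep_def by (metis matrix_mul_lid)
  obtain N where N: "N ** \<rho> (mat 1) = mat 1"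
    using assms unfolding is_rep_def invertible_def by blast
  have "mat 1 = N ** (\<rho> (mat 1) ** \<rho> (mat 1))"
    using N idem by simp
  also have "\<dots> = \<rho> (mat 1)"
    using N by (simp add: matrix_mul_assoc)
  finally show ?thesis by simp
qed

lemma compact_lie_group_one: "compact_lie_group G \<Longrightarrow> mat 1 \<in> G"
  by (simp add: compact_lie_group_def)

lemma has_vector_derivative_drep:
  assumes rep: "is_rep G \<rho>" and G: "compact_lie_group G" and Y: "Y \<in> lie_alg G"
  shows "((\<lambda>t. \<rho> (mexp (t *\<^sub>R Y))) has_vector_derivative drep \<rho> Y) (at 0)"
proof -
  have in_G: "mexp (t *\<^sub>R Y) \<in> G" for t
    using Y by (simp add: lie_alg_def)
  have "continuous_on UNIV (\<lambda>t. \<rho> (mexp (t *\<^sub>R Y)))"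
    by (rule continuous_on_compose2[of G \<rho> UNIV "\<lambda>t. mexp (t *\<^sub>R Y)"])
      (use rep in_G continuous_on_mexp_scaleR in \<open>auto simp: is_rep_def\<close>)
  moreover have "\<rho> (mexp (0 *\<^sub>R Y)) = mat 1"
    using is_rep_one[OF rep compact_lie_group_one[OF G]] by (simp add: mexp_zero)
  moreover have "\<rho> (mexp ((s + t) *\<^sub>R Y)) = \<rho> (mexp (s *\<^sub>R Y)) ** \<rho> (mexp (t *\<^sub>R Y))" for s t
    using rep in_G unfolding is_rep_def mexp_add by blast
  ultimately obtain D where D: "((\<lambda>t. \<rho> (mexp (t *\<^sub>R Y))) has_vector_derivative D) (at 0)"
    using one_parameter_group_has_vector_derivative[of "\<lambda>t. \<rho> (mexp (t *\<^sub>R Y))"] by auto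
  moreover from D have "drep \<rho> Y = D"
    unfolding drep_def by (rule vector_derivative_at)
  ultimately show ?thesis by simp
qed

lemma lie_alg_scaleR: "Y \<in> lie_alg G \<Longrightarrow> c *\<^sub>R Y \<in> lie_alg G"
  unfolding lie_alg_def by auto

lemma drep_scaleR:
  assumes "is_rep G \<rho>" and "compact_lie_group G" and "Y \<in> lie_alg G"
  shows "drep \<rho> (c *\<^sub>R Y) = c *\<^sub>R drep \<rho> Y"
proof -
  have "(((\<lambda>t. \<rho> (mexp (t *\<^sub>R Y))) \<circ> (\<lambda>t. c * t)) has_vector_derivative (c *\<^sub>R drep \<rho> Y)) (at 0)"
    by (rule vector_diff_chain_at) (auto intro!: derivative_eq_intros has_vector_derivative_drep[OF assms])
  then have "((\<lambda>t. \<rho> (mexp (t *\<^sub>R (c *\<^sub>R Y)))) has_vector_derivative (c *\<^sub>R drep \<rho> Y)) (at 0)"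
    by (simp add: o_def mult.commute)
  then show ?thesis
    unfolding drep_def by (rule vector_derivative_at)
qed

lemma sum_UNIV_sum_type:
  "(\<Sum>x\<in>(UNIV::('a::finite + 'b::finite) set). f x) = (\<Sum>a\<in>UNIV. f (Inl a)) + (\<Sum>b\<in>UNIV. f (Inr b))"
proof -
  have U: "(UNIV::('a + 'b) set) = range Inl \<union> range Inr"
    by (metis UNIV_Plus_UNIV Plus_def)
  show ?thesis
    unfolding U by (subst sum.union_disjoint) (auto simp: sum.reindex)
qed

lemma sum_UNIV_prod_type:
  "(\<Sum>x\<in>(UNIV::('a::finite \<times> 'b::finite) set). f x) = (\<Sum>a\<in>UNIV. \<Sum>b\<in>UNIV. f (a, b))"
  by (simp add: sum.cartesian_product)

lemma blockdiag_nth [simp]: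
  "blockdiag A B $ Inl a $ Inl b = A $ a $ b"
  "blockdiag A B $ Inr c $ Inr d = B $ c $ d"
  "blockdiag A B $ Inl a $ Inr d = 0"
  "blockdiag A B $ Inr c $ Inl b = 0"
  by (simp_all add: blockdiag_def)

lemma blockdiag_eqI:
  fixes M :: "complex^('n::finite + 'p::finite)^('n + 'p)"
  assumes "\<And>a b. M $ Inl a $ Inl b = A $ a $ b" "\<And>c d. M $ Inr c $ Inr d = B $ c $ d"
    "\<And>a d. M $ Inl a $ Inr d = 0" "\<And>c b. M $ Inr c $ Inl b = 0"
  shows "M = blockdiag A B"
  unfolding vec_eq_iff
proof (intro allI)
  show "M $ x $ y = blockdiag A B $ x $ y" for x y
    by (cases x; cases y) (simp_all add: assms)
qed

lemma blockdiag_mult: "blockdiag A B ** blockdiag C D = blockdiag (A ** C) (B ** D)"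
  by (rule blockdiag_eqI) (simp_all add: matrix_matrix_mult_def sum_UNIV_sum_type)

lemma blockdiag_one: "blockdiag (mat 1 :: complex^'n^'n) (mat 1 :: complex^'p^'p) = mat 1"
  by (rule sym, rule blockdiag_eqI) (simp_all add: mat_def)

lemma mexp_blockdiag: "mexp (blockdiag A B) = blockdiag (mexp A) (mexp B)"
proof -
  have "mpow (blockdiag A B) k = blockdiag (mpow A k) (mpow B k)" for k
    by (induction k) (simp_all add: blockdiag_mult blockdiag_one)
  then show ?thesis
    by (intro blockdiag_eqI) (simp_all add: mexp_nth)
qed

lemma mexp_scaleR_blockdiag_left:
  "mexp (t *\<^sub>R blockdiag Y (0::complex^'p^'p)) = blockdiag (mexp (t *\<^sub>R Y)) (mat 1)"
proof -
  have "t *\<^sub>R blockdiag Y (0::complex^'p^'p) = blockdiag (t *\<^sub>R Y) 0"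
    by (rule blockdiag_eqI) simp_all
  then show ?thesis by (simp add: mexp_blockdiag mexp_zero)
qed

lemma mexp_scaleR_blockdiag_right:
  "mexp (t *\<^sub>R blockdiag (0::complex^'n^'n) Y) = blockdiag (mat 1) (mexp (t *\<^sub>R Y))"
proof -
  have "t *\<^sub>R blockdiag (0::complex^'n^'n) Y = blockdiag 0 (t *\<^sub>R Y)"
    by (rule blockdiag_eqI) simp_all
  then show ?thesis by (simp add: mexp_blockdiag mexp_zero)
qed

lemma blk_blockdiag [simp]: "blk1 (blockdiag A B) = A" "blk2 (blockdiag A B) = B"
  by (simp_all add: blk1_def blk2_def vec_eq_iff)

lemma blockdiag_in_lie_alg_prod_group_left:
  assumes "compact_lie_group G'" "Y \<in> lie_alg G"
  shows "blockdiag Y (0::complex^'p^'p) \<in> lie_alg (prod_group G (G'::(complex^'p^'p) set))"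
  unfolding lie_alg_def
proof (intro CollectI allI)
  have "mexp (t *\<^sub>R Y) \<in> G" "mat 1 \<in> G'" for t
    using assms by (auto simp: lie_alg_def compact_lie_group_one)
  then show "mexp (t *\<^sub>R blockdiag Y 0) \<in> prod_group G G'" for t
    unfolding mexp_scaleR_blockdiag_left prod_group_def by blast
qed

lemma blockdiag_in_lie_alg_prod_group_right:
  assumes "compact_lie_group G" "Y \<in> lie_alg G'"
  shows "blockdiag (0::complex^'n^'n) Y \<in> lie_alg (prod_group (G::(complex^'n^'n) set) G')"
  unfolding lie_alg_def
proof (intro CollectI allI)
  have "mexp (t *\<^sub>R Y) \<in> G'" "mat 1 \<in> G" for t
    using assms by (auto simp: lie_alg_def compact_lie_group_one)
  then show "mexp (t *\<^sub>R blockdiag 0 Y) \<in> prod_group G G'" for t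
    unfolding mexp_scaleR_blockdiag_right prod_group_def by blast
qed

lemma kron_nth [simp]: "kron A B $ p $ q = A $ fst p $ fst q * B $ snd p $ snd q"
  by (simp add: kron_def)

lemma kron_eqI: "(\<And>p q. M $ p $ q = A $ fst p $ fst q * B $ snd p $ snd q) \<Longrightarrow> M = kron A B"
  by (simp add: vec_eq_iff)

lemma kron_mult: "kron A B ** kron C D = kron (A ** C) (B ** D)"
proof (rule kron_eqI)
  fix p q :: "'a \<times> 'b"
  have "(kron A B ** kron C D) $ p $ q
      = (\<Sum>r\<in>UNIV \<times> UNIV. A $ fst p $ fst r * B $ snd p $ snd r * (C $ fst r $ fst q * D $ snd r $ snd q))"
    by (simp add: matrix_matrix_mult_def)
  also have "\<dots> = (\<Sum>r1\<in>UNIV. \<Sum>r2\<in>UNIV. (A $ fst p $ r1 * C $ r1 $ fst q) * (B $ snd p $ r2 * D $ r2 $ snd q))"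
    by (simp add: sum_UNIV_prod_type algebra_simps)
  also have "\<dots> = (A ** C) $ fst p $ fst q * (B ** D) $ snd p $ snd q"
    by (simp add: matrix_matrix_mult_def sum_product)
  finally show "(kron A B ** kron C D) $ p $ q = (A ** C) $ fst p $ fst q * (B ** D) $ snd p $ snd q" .
qed

lemma kron_one: "kron (mat 1 :: complex^'m^'m) (mat 1 :: complex^'q^'q) = mat 1"
  by (rule sym, rule kron_eqI) (auto simp: mat_def prod_eq_iff)

lemma kron_linear_simps [simp]:
  "kron (A + A') B = kron A B + kron A' B"
  "kron A (B + B') = kron A B + kron A B'"
  "kron (c *\<^sub>R A) B = c *\<^sub>R kron A B"
  "kron A (c *\<^sub>R B) = c *\<^sub>R kron A B"
  "kron 0 B = 0" "kron A 0 = 0"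
  "kron (A - A') B = kron A B - kron A' B"
  "kron A (B - B') = kron A B - kron A B'"
  "kron (- A) B = - kron A B"
  "kron A (- B) = - kron A B"
  by (simp_all add: vec_eq_iff algebra_simps)

lemma bounded_linear_kron_left: "bounded_linear (\<lambda>A. kron A C)"
  by (simp add: linear_conv_bounded_linear[symmetric] linearI)

lemma bounded_linear_kron_right: "bounded_linear (\<lambda>B. kron C B)"
  by (simp add: linear_conv_bounded_linear[symmetric] linearI)

lemma D_op_Nil [simp]: "D_op \<rho> [] = 0"
  by (simp add: D_op_def)

lemma D_op_Cons [simp]:
  "D_op \<rho> ((Y, Z) # s) = (- 1 / 2 :: real) *\<^sub>R (drep \<rho> Y ** drep \<rho> Z + drep \<rho> Z ** drep \<rho> Y) + D_op \<rho> s"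
  by (simp add: D_op_def)

lemma D_op_append [simp]: "D_op \<rho> (s @ s') = D_op \<rho> s + D_op \<rho> s'"
  by (simp add: D_op_def)

lemma drep_tensor_rep_left:
  assumes rep: "is_rep G \<rho>" "is_rep G' \<rho>'" and G: "compact_lie_group G" "compact_lie_group G'"
    and Y: "Y \<in> lie_alg G"
  shows "drep (tensor_rep \<rho> \<rho>') (blockdiag Y 0) = kron (drep \<rho> Y) (mat 1)"
proof -
  have eq: "(\<lambda>t. tensor_rep \<rho> \<rho>' (mexp (t *\<^sub>R blockdiag Y 0))) = (\<lambda>t. kron (\<rho> (mexp (t *\<^sub>R Y))) (mat 1))"
    using is_rep_one[OF rep(2) compact_lie_group_one[OF G(2)]]
    by (simp add: tensor_rep_def mexp_scaleR_blockdiag_left)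
  have "((\<lambda>t. kron (\<rho> (mexp (t *\<^sub>R Y))) (mat 1)) has_vector_derivative kron (drep \<rho> Y) (mat 1)) (at 0)"
    by (rule bounded_linear.has_vector_derivative[OF bounded_linear_kron_left has_vector_derivative_drep[OF rep(1) G(1) Y]])
  then show ?thesis
    unfolding drep_def eq by (rule vector_derivative_at)
qed

lemma drep_tensor_rep_right:
  assumes rep: "is_rep G \<rho>" "is_rep G' \<rho>'" and G: "compact_lie_group G" "compact_lie_group G'"
    and Y: "Y \<in> lie_alg G'"
  shows "drep (tensor_rep \<rho> \<rho>') (blockdiag 0 Y) = kron (mat 1) (drep \<rho>' Y)"
proof -
  have eq: "(\<lambda>t. tensor_rep \<rho> \<rho>' (mexp (t *\<^sub>R blockdiag 0 Y))) = (\<lambda>t. kron (mat 1) (\<rho>' (mexp (t *\<^sub>R Y))))"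
    using is_rep_one[OF rep(1) compact_lie_group_one[OF G(1)]]
    by (simp add: tensor_rep_def mexp_scaleR_blockdiag_right)
  have "((\<lambda>t. kron (mat 1) (\<rho>' (mexp (t *\<^sub>R Y)))) has_vector_derivative kron (mat 1) (drep \<rho>' Y)) (at 0)"
    by (rule bounded_linear.has_vector_derivative[OF bounded_linear_kron_right has_vector_derivative_drep[OF rep(2) G(2) Y]])
  then show ?thesis
    unfolding drep_def eq by (rule vector_derivative_at)
qed

text \<open>The element c s + c' s' of Sym^2(g + g'), for g and g' embedded block-diagonally.\<close>

definition sym2_pair :: "real \<Rightarrow> ((complex^'n::finite^'n) \<times> (complex^'n^'n)) list
    \<Rightarrow> real \<Rightarrow> ((complex^'p::finite^'p) \<times> (complex^'p^'p)) list
    \<Rightarrow> ((complex^('n + 'p)^('n + 'p)) \<times> (complex^('n + 'p)^('n + 'p))) list" where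
  "sym2_pair c s c' s' =
     map (\<lambda>(Y, Z). (blockdiag (c *\<^sub>R Y) 0, blockdiag Z 0)) s @
     map (\<lambda>(Y, Z). (blockdiag 0 (c' *\<^sub>R Y), blockdiag 0 Z)) s'"

lemma sym2_elem_sym2_pair:
  assumes "compact_lie_group G" "compact_lie_group G'" "sym2_elem G s" "sym2_elem G' s'"
  shows "sym2_elem (prod_group G G') (sym2_pair c s c' s')"
  using assms unfolding sym2_elem_def sym2_pair_def
  by (auto intro!: blockdiag_in_lie_alg_prod_group_left blockdiag_in_lie_alg_prod_group_right lie_alg_scaleR)

lemma D_op_tensor_rep_left:
  assumes rep: "is_rep G \<rho>" "is_rep G' \<rho>'" and G: "compact_lie_group G" "compact_lie_group G'"
  shows "sym2_elem G s \<Longrightarrow> D_op (tensor_rep \<rho> \<rho>') (map (\<lambda>(Y, Z). (blockdiag (c *\<^sub>R Y) 0, blockdiag Z 0)) s)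
    = c *\<^sub>R kron (D_op \<rho> s) (mat 1)"
proof (induction s)
  case Nil
  then show ?case by simp
next
  case (Cons YZ s)
  obtain Y Z where YZ: "YZ = (Y, Z)" by fastforce
  have Y: "Y \<in> lie_alg G" and Z: "Z \<in> lie_alg G" and s: "sym2_elem G s"
    using Cons.prems by (auto simp: sym2_elem_def YZ)
  have "drep (tensor_rep \<rho> \<rho>') (blockdiag (c *\<^sub>R Y) 0) = c *\<^sub>R kron (drep \<rho> Y) (mat 1)"
    using drep_tensor_rep_left[OF rep G lie_alg_scaleR[OF Y]] drep_scaleR[OF rep(1) G(1) Y] by simp
  moreover have "drep (tensor_rep \<rho> \<rho>') (blockdiag Z 0) = kron (drep \<rho> Z) (mat 1)"
    by (rule drep_tensor_rep_left[OF rep G Z])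
  ultimately show ?case
    using Cons.IH[OF s]
    by (simp add: YZ kron_mult matrix_scalar_ac scalar_matrix_assoc[symmetric] algebra_simps)
qed

lemma D_op_tensor_rep_right:
  assumes rep: "is_rep G \<rho>" "is_rep G' \<rho>'" and G: "compact_lie_group G" "compact_lie_group G'"
  shows "sym2_elem G' s \<Longrightarrow> D_op (tensor_rep \<rho> \<rho>') (map (\<lambda>(Y, Z). (blockdiag 0 (c *\<^sub>R Y), blockdiag 0 Z)) s)
    = c *\<^sub>R kron (mat 1) (D_op \<rho>' s)"
proof (induction s)
  case Nil
  then show ?case by simp
next
  case (Cons YZ s)
  obtain Y Z where YZ: "YZ = (Y, Z)" by fastforce
  have Y: "Y \<in> lie_alg G'" and Z: "Z \<in> lie_alg G'" and s: "sym2_elem G' s"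
    using Cons.prems by (auto simp: sym2_elem_def YZ)
  have "drep (tensor_rep \<rho> \<rho>') (blockdiag 0 (c *\<^sub>R Y)) = c *\<^sub>R kron (mat 1) (drep \<rho>' Y)"
    using drep_tensor_rep_right[OF rep G lie_alg_scaleR[OF Y]] drep_scaleR[OF rep(2) G(2) Y] by simp
  moreover have "drep (tensor_rep \<rho> \<rho>') (blockdiag 0 Z) = kron (mat 1) (drep \<rho>' Z)"
    by (rule drep_tensor_rep_right[OF rep G Z])
  ultimately show ?case
    using Cons.IH[OF s]
    by (simp add: YZ kron_mult matrix_scalar_ac scalar_matrix_assoc[symmetric] algebra_simps)
qed

lemma D_op_tensor_rep_sym2_pair:
  assumes "is_rep G \<rho>" "is_rep G' \<rho>'" "compact_lie_group G" "compact_lie_group G'"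
    and "sym2_elem G s" "sym2_elem G' s'"
  shows "D_op (tensor_rep \<rho> \<rho>') (sym2_pair c s c' s')
    = c *\<^sub>R kron (D_op \<rho> s) (mat 1) + c' *\<^sub>R kron (mat 1) (D_op \<rho>' s')"
  using assms D_op_tensor_rep_left[OF assms(1-4)] D_op_tensor_rep_right[OF assms(1-4)]
  by (simp add: sym2_pair_def)

section \<open>Characteristic polynomials of Kronecker sums\<close>

definition root_poly :: "('i::finite \<Rightarrow> complex) \<Rightarrow> complex poly" where
  "root_poly d = (\<Prod>i\<in>UNIV. [:d i, -1:])"

lemma const_minus_X: "[:a:] - [:0, 1:] = [:a, -1 :: 'a::comm_ring_1:]"
  by (simp add: poly_eq_iff coeff_pCons split: nat.split)

definition const_mat :: "complex^'n^'m \<Rightarrow> complex poly^'n^'m" where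
  "const_mat A = (\<chi> i j. [:A $ i $ j:])"

lemma const_mat_mult: "const_mat (A ** B) = const_mat A ** const_mat B"
  by (simp add: const_mat_def vec_eq_iff matrix_matrix_mult_def sum_to_poly mult.commute)

lemma const_mat_one: "const_mat (mat 1 :: complex^'n^'n) = mat 1"
  by (simp add: const_mat_def vec_eq_iff mat_def)

lemma char_pol_const_mat: "char_pol A = det (const_mat A - mat [:0, 1:])"
  unfolding char_pol_def by (rule arg_cong[where f = det]) (simp add: const_mat_def vec_eq_iff mat_def)

lemma matrix_mult_scalar_mat_middle:
  fixes P :: "'a::comm_semiring_1^'n^'m"
  shows "P ** mat x ** Q = (\<chi> i j. x * (P ** Q) $ i $ j)"
proof -
  have "P ** mat x = (\<chi> i j. x * P $ i $ j)"
    by (simp add: vec_eq_iff matrix_matrix_mult_def mat_def mult.commute if_distrib if_distribR cong: if_cong)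
  then show ?thesis
    by (simp add: vec_eq_iff matrix_matrix_mult_def sum_distrib_left mult.assoc)
qed

lemma char_pol_similar:
  fixes P T Q :: "complex^'n^'n"
  assumes PQ: "P ** Q = mat 1"
  shows "char_pol (P ** T ** Q) = char_pol T"
proof -
  let ?X = "mat [:0, 1:] :: complex poly^'n^'n"
  have PQ': "const_mat P ** const_mat Q = mat 1"
    using PQ by (metis const_mat_mult const_mat_one)
  have X_central: "const_mat P ** ?X ** const_mat Q = ?X"
    unfolding matrix_mult_scalar_mat_middle PQ' by (simp add: vec_eq_iff mat_def)
  have distrib: "const_mat P ** (const_mat T - ?X) ** const_mat Q
      = const_mat P ** const_mat T ** const_mat Q - const_mat P ** ?X ** const_mat Q"
    by (simp add: matrix_matrix_mult_def vec_eq_iff sum_subtractf algebra_simps)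
  have "const_mat (P ** T ** Q) - ?X = const_mat P ** (const_mat T - ?X) ** const_mat Q"
    unfolding distrib X_central const_mat_mult by (rule refl)
  then have "char_pol (P ** T ** Q) = det (const_mat P ** const_mat Q) * det (const_mat T - ?X)"
    unfolding char_pol_const_mat by (simp add: det_mul)
  then show ?thesis
    unfolding PQ' char_pol_const_mat by simp
qed

lemma permutation_decreases_injective_rank:
  fixes r :: "'n::finite \<Rightarrow> nat"
  assumes "inj r" "p permutes (UNIV::'n set)" "p \<noteq> id"
  shows "\<exists>i. r (p i) < r i"
proof (rule ccontr)
  assume "\<not> ?thesis"
  then have le: "\<forall>i. r i \<le> r (p i)" by (simp add: not_less)
  obtain j where j: "p j \<noteq> j" using assms(3) by (metis eq_id_iff)
  then have "r j < r (p j)" using le assms(1) by (metis injD order.not_eq_order_implies_strict)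
  then have "(\<Sum>i\<in>UNIV. r i) < (\<Sum>i\<in>UNIV. r (p i))"
    using le by (intro sum_strict_mono_ex1) auto
  moreover have "(\<Sum>i\<in>UNIV. r (p i)) = (\<Sum>i\<in>UNIV. r i)"
    using sum.permute[OF assms(2), of r] by (simp add: o_def)
  ultimately show False by simp
qed

text \<open>A matrix is triangular here with respect to an arbitrary injective ranking r of its indices,
  since the index types carry no order.\<close>

lemma det_triangular_rank:
  fixes M :: "'a::comm_ring_1^'n^'n" and r :: "'n \<Rightarrow> nat"
  assumes r: "inj r" and lower_zero: "\<And>i j. r j < r i \<Longrightarrow> M $ i $ j = 0"
  shows "det M = (\<Prod>i\<in>UNIV. M $ i $ i)"
proof -
  have non_id_zero: "of_int (sign p) * (\<Prod>i\<in>UNIV. M $ i $ p i) = 0" if p: "p permutes UNIV" "p \<noteq> id" for p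
  proof -
    obtain i where "r (p i) < r i"
      using permutation_decreases_injective_rank[OF r p] by blast
    then have "M $ i $ p i = 0"
      by (rule lower_zero)
    then have "(\<Prod>i\<in>UNIV. M $ i $ p i) = 0"
      by (intro prod_zero) auto
    then show ?thesis
      by simp
  qed
  have "det M = (\<Sum>p\<in>{p. p permutes (UNIV :: 'n set)}. if p = id then \<Prod>i\<in>UNIV. M $ i $ i else 0)"
    unfolding det_def by (intro sum.cong refl) (auto simp: non_id_zero)
  then show ?thesis
    by simp
qed

lemma char_pol_triangular_rank:
  fixes T :: "complex^'n^'n" and r :: "'n \<Rightarrow> nat"
  assumes "inj r" and "\<And>i j. r j < r i \<Longrightarrow> T $ i $ j = 0"
  shows "char_pol T = root_poly (\<lambda>i. T $ i $ i)"
proof -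
  have "det (\<chi> i j. [:T $ i $ j:] - (if i = j then [:0, 1:] else 0)) = (\<Prod>i\<in>UNIV. [:T $ i $ i:] - [:0, 1:])"
    by (subst det_triangular_rank[OF assms(1)]) (auto simp: assms(2))
  then show ?thesis
    unfolding char_pol_def root_poly_def const_minus_X .
qed

definition reindex_mat :: "('n \<Rightarrow> nat) \<Rightarrow> complex Matrix.mat \<Rightarrow> complex^'n^'n" where
  "reindex_mat h M = (\<chi> i j. M $$ (h i, h j))"

lemma reindex_mat_mult:
  assumes h: "bij_betw h UNIV {0..<n}" and "M \<in> carrier_mat n n" "N \<in> carrier_mat n n"
  shows "reindex_mat h (M * N) = reindex_mat h M ** reindex_mat h N"
proof -
  have "(M * N) $$ (h i, h j) = (\<Sum>l\<in>UNIV. M $$ (h i, h l) * N $$ (h l, h j))" for i j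
  proof -
    have "h i < n" "h j < n"
      using h by (auto simp: bij_betw_def)
    then have "(M * N) $$ (h i, h j) = (\<Sum>k\<in>{0..<n}. M $$ (h i, k) * N $$ (k, h j))"
      using assms by (simp add: scalar_prod_def)
    also have "\<dots> = (\<Sum>l\<in>UNIV. M $$ (h i, h l) * N $$ (h l, h j))"
      by (rule sum.reindex_bij_betw[OF h, symmetric])
    finally show ?thesis .
  qed
  then show ?thesis
    unfolding reindex_mat_def by (simp add: vec_eq_iff matrix_matrix_mult_def)
qed

lemma schur_triangularization:
  fixes A :: "complex^'m^'m"
  obtains P T Q and r :: "'m \<Rightarrow> nat"
  where "A = P ** T ** Q" "P ** Q = mat 1" "inj r" "\<And>i. r i < CARD('m)"
    "\<And>i j. r j < r i \<Longrightarrow> T $ i $ j = 0"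
proof -
  let ?n = "CARD('m)"
  obtain h where h: "bij_betw h (UNIV::'m set) {0..<?n}"
    using ex_bij_betw_finite_nat[of "UNIV::'m set"] by auto
  define g where "g = inv_into UNIV h"
  have h_inj: "inj h" and h_less: "\<And>i. h i < ?n"
    using h by (auto simp: bij_betw_def)
  have gh: "g (h i) = i" for i
    using h_inj by (simp add: g_def)
  define J where "J = Matrix.mat ?n ?n (\<lambda>(k, l). A $ g k $ g l)"
  have J: "J \<in> carrier_mat ?n ?n"
    unfolding J_def by simp
  obtain es where "char_poly J = (\<Prod>e\<leftarrow>es. [:- e, 1:])"
    using char_poly_factorized[OF J] by auto
  moreover obtain B P Q where sd: "schur_decomposition J es = (B, P, Q)"
    by (cases "schur_decomposition J es") auto
  ultimately have "similar_mat_wit J B P Q" and B_ut: "upper_triangular B"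
    using schur_decomposition[OF J] by auto
  then have car: "B \<in> carrier_mat ?n ?n" "P \<in> carrier_mat ?n ?n" "Q \<in> carrier_mat ?n ?n"
    and PQ: "P * Q = 1\<^sub>m ?n" and J_eq: "J = P * B * Q"
    using J unfolding similar_mat_wit_def Let_def by auto
  have "A = reindex_mat h J"
    unfolding reindex_mat_def J_def by (simp add: vec_eq_iff h_less gh)
  also have "\<dots> = reindex_mat h P ** reindex_mat h B ** reindex_mat h Q"
    unfolding J_eq using car by (simp add: reindex_mat_mult[OF h] matrix_mul_assoc)
  finally have "A = reindex_mat h P ** reindex_mat h B ** reindex_mat h Q" .
  moreover have "reindex_mat h P ** reindex_mat h Q = mat 1"
    using reindex_mat_mult[OF h car(2,3)] PQ h_less
    by (simp add: reindex_mat_def vec_eq_iff mat_def inj_eq[OF h_inj])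
  moreover have "reindex_mat h B $ i $ j = 0" if "h j < h i" for i j
    using B_ut that h_less car(1) unfolding reindex_mat_def by auto
  ultimately show ?thesis
    using that h_inj h_less by blast
qed

lemma inj_lex_rank:
  fixes r1 :: "'a \<Rightarrow> nat" and r2 :: "'b \<Rightarrow> nat"
  assumes "inj r1" "inj r2" "\<And>b. r2 b < N"
  shows "inj (\<lambda>p. r1 (fst p) * N + r2 (snd p))"
proof (rule injI)
  fix p p' assume eq: "r1 (fst p) * N + r2 (snd p) = r1 (fst p') * N + r2 (snd p')"
  then have "r1 (fst p) = r1 (fst p')"
    using assms(3)[of "snd p"] assms(3)[of "snd p'"]
    by (metis add.commute div_mult_self1 div_less add_0 bot_nat_0.extremum_strict)
  then have "fst p = fst p'" and "r2 (snd p) = r2 (snd p')"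
    using eq assms(1) by (auto dest: injD)
  then show "p = p'"
    using assms(2) by (auto dest: injD intro: prod_eqI)
qed

lemma kron_sum_triangular_lex_rank:
  fixes T1 :: "complex^'m^'m" and T2 :: "complex^'q^'q" and r1 :: "'m \<Rightarrow> nat" and r2 :: "'q \<Rightarrow> nat"
  assumes T1: "\<And>i j. r1 j < r1 i \<Longrightarrow> T1 $ i $ j = 0" and T2: "\<And>i j. r2 j < r2 i \<Longrightarrow> T2 $ i $ j = 0"
    and r2_less: "\<And>b. r2 b < N"
    and less: "r1 (fst p') * N + r2 (snd p') < r1 (fst p) * N + r2 (snd p)"
  shows "(c1 *\<^sub>R kron T1 (mat 1) + c2 *\<^sub>R kron (mat 1) T2) $ p $ p' = 0"
proof (cases "fst p = fst p'")
  case True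
  then have "r2 (snd p') < r2 (snd p)"
    using less by simp
  then have "snd p \<noteq> snd p'" and "T2 $ snd p $ snd p' = 0"
    using T2 by auto
  then show ?thesis
    using True by (simp add: mat_def)
next
  case False
  have "r1 (fst p') < r1 (fst p) \<or> snd p \<noteq> snd p'"
    using less r2_less[of "snd p"] by (cases "snd p = snd p'") (auto simp: not_less)
  then show ?thesis
    using False T1 by (auto simp: mat_def)
qed

lemma matrix_add_rdistrib: "(A + B) ** C = A ** C + B ** (C :: 'a::semiring_1^_^_)"
  by (simp add: matrix_matrix_mult_def vec_eq_iff sum.distrib algebra_simps)

lemma char_pol_kron_sum_triangular:
  fixes T1 :: "complex^'m^'m" and T2 :: "complex^'q^'q" and r1 :: "'m \<Rightarrow> nat" and r2 :: "'q \<Rightarrow> nat"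
  assumes r1: "inj r1" and T1: "\<And>i j. r1 j < r1 i \<Longrightarrow> T1 $ i $ j = 0"
    and r2: "inj r2" "\<And>i. r2 i < CARD('q)" and T2: "\<And>i j. r2 j < r2 i \<Longrightarrow> T2 $ i $ j = 0"
  shows "char_pol (c1 *\<^sub>R kron T1 (mat 1) + c2 *\<^sub>R kron (mat 1) T2)
    = root_poly (\<lambda>p. of_real c1 * T1 $ fst p $ fst p + of_real c2 * T2 $ snd p $ snd p)"
proof -
  let ?T = "c1 *\<^sub>R kron T1 (mat 1 :: complex^'q^'q) + c2 *\<^sub>R kron (mat 1 :: complex^'m^'m) T2"
  have "char_pol ?T = root_poly (\<lambda>p. ?T $ p $ p)"
  proof (rule char_pol_triangular_rank[OF inj_lex_rank[OF r1 r2]])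
    show "?T $ p $ p' = 0" if "r1 (fst p') * CARD('q) + r2 (snd p') < r1 (fst p) * CARD('q) + r2 (snd p)" for p p'
      by (rule kron_sum_triangular_lex_rank[OF T1 T2 r2(2) that])
  qed
  also have "(\<lambda>p. ?T $ p $ p) = (\<lambda>p. of_real c1 * T1 $ fst p $ fst p + of_real c2 * T2 $ snd p $ snd p)"
    unfolding vector_add_component vector_scaleR_component kron_nth by (simp add: scaleR_conv_of_real mat_def)
  finally show ?thesis .
qed

lemma char_pol_kron_sum:
  fixes A :: "complex^'m^'m" and B :: "complex^'q^'q"
  obtains d1 :: "'m \<Rightarrow> complex" and d2 :: "'q \<Rightarrow> complex"
  where "char_pol A = root_poly d1" "char_pol B = root_poly d2"
    "\<And>c1 c2. char_pol (c1 *\<^sub>R kron A (mat 1) + c2 *\<^sub>R kron (mat 1) B)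
       = root_poly (\<lambda>p. of_real c1 * d1 (fst p) + of_real c2 * d2 (snd p))"
proof -
  obtain P1 T1 Q1 :: "complex^'m^'m" and r1 :: "'m \<Rightarrow> nat" where A: "A = P1 ** T1 ** Q1" and PQ1: "P1 ** Q1 = mat 1"
    and r1: "inj r1" "\<And>i. r1 i < CARD('m)" and T1: "\<And>i j. r1 j < r1 i \<Longrightarrow> T1 $ i $ j = 0"
    using schur_triangularization[of A] by blast
  obtain P2 T2 Q2 :: "complex^'q^'q" and r2 :: "'q \<Rightarrow> nat" where B: "B = P2 ** T2 ** Q2" and PQ2: "P2 ** Q2 = mat 1"
    and r2: "inj r2" "\<And>i. r2 i < CARD('q)" and T2: "\<And>i j. r2 j < r2 i \<Longrightarrow> T2 $ i $ j = 0"
    using schur_triangularization[of B] by blast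
  have "char_pol A = root_poly (\<lambda>i. T1 $ i $ i)"
    unfolding A char_pol_similar[OF PQ1] by (rule char_pol_triangular_rank[OF r1(1) T1])
  moreover have "char_pol B = root_poly (\<lambda>i. T2 $ i $ i)"
    unfolding B char_pol_similar[OF PQ2] by (rule char_pol_triangular_rank[OF r2(1) T2])
  moreover have "char_pol (c1 *\<^sub>R kron A (mat 1) + c2 *\<^sub>R kron (mat 1) B)
      = root_poly (\<lambda>p. of_real c1 * T1 $ fst p $ fst p + of_real c2 * T2 $ snd p $ snd p)" for c1 c2
  proof -
    let ?T = "c1 *\<^sub>R kron T1 (mat 1 :: complex^'q^'q) + c2 *\<^sub>R kron (mat 1 :: complex^'m^'m) T2"
    have "kron P1 P2 ** ?T ** kron Q1 Q2
        = c1 *\<^sub>R (kron P1 P2 ** kron T1 (mat 1) ** kron Q1 Q2) + c2 *\<^sub>R (kron P1 P2 ** kron (mat 1) T2 ** kron Q1 Q2)"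
      by (simp only: matrix_add_ldistrib matrix_add_rdistrib matrix_scalar_ac scalar_matrix_assoc[symmetric])
    also have "\<dots> = c1 *\<^sub>R kron A (mat 1) + c2 *\<^sub>R kron (mat 1) B"
      by (simp only: kron_mult matrix_mul_lid matrix_mul_rid PQ1 PQ2 A[symmetric] B[symmetric])
    finally have "char_pol (c1 *\<^sub>R kron A (mat 1) + c2 *\<^sub>R kron (mat 1) B) = char_pol (kron P1 P2 ** ?T ** kron Q1 Q2)"
      by simp
    also have "\<dots> = char_pol ?T"
      by (rule char_pol_similar) (simp only: kron_mult PQ1 PQ2 kron_one)
    also have "\<dots> = root_poly (\<lambda>p. of_real c1 * T1 $ fst p $ fst p + of_real c2 * T2 $ snd p $ snd p)"
      by (rule char_pol_kron_sum_triangular[OF r1(1) T1 r2 T2])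
    finally show ?thesis .
  qed
  ultimately show ?thesis
    by (rule that)
qed

section \<open>Resultants and multiple roots\<close>

lemma poly_root_poly: "poly (root_poly d) x = (\<Prod>i\<in>UNIV. d i - x)"
  by (simp add: root_poly_def poly_prod)

lemma root_poly_nonzero: "root_poly d \<noteq> 0"
  by (simp add: root_poly_def)

lemma poly_root_poly_eq_0_iff: "poly (root_poly d) x = 0 \<longleftrightarrow> x \<in> range d"
  by (auto simp: poly_root_poly)

lemma resultant_nonzero_iff_no_common_root:
  fixes p q :: "complex poly"
  assumes p: "p \<noteq> 0"
  shows "resultant p q \<noteq> 0 \<longleftrightarrow> (\<forall>x. poly p x = 0 \<longrightarrow> poly q x \<noteq> 0)"
proof -
  have "resultant p q = 0 \<longleftrightarrow> degree (gcd p q) \<noteq> 0"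
    using resultant_0_gcd by blast
  also have "\<dots> \<longleftrightarrow> (\<exists>x. poly (gcd p q) x = 0)"
  proof
    assume "degree (gcd p q) \<noteq> 0"
    then show "\<exists>x. poly (gcd p q) x = 0"
      using fundamental_theorem_of_algebra[of "gcd p q"] by (simp add: constant_degree)
  next
    assume "\<exists>x. poly (gcd p q) x = 0"
    then obtain x where "[:- x, 1:] dvd gcd p q"
      by (auto simp: poly_eq_0_iff_dvd)
    moreover have "gcd p q \<noteq> 0"
      using p by simp
    ultimately have "degree [:- x, 1:] \<le> degree (gcd p q)"
      by (rule dvd_imp_degree_le)
    then show "degree (gcd p q) \<noteq> 0"
      by simp
  qed
  also have "\<dots> \<longleftrightarrow> (\<exists>x. poly p x = 0 \<and> poly q x = 0)"
    by (simp add: poly_eq_0_iff_dvd)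
  finally show ?thesis by blast
qed

lemma resultant_root_poly_nonzero_iff: "resultant (root_poly d) q \<noteq> 0 \<longleftrightarrow> (\<forall>i. poly q (d i) \<noteq> 0)"
  using resultant_nonzero_iff_no_common_root[OF root_poly_nonzero] by (auto simp: poly_root_poly_eq_0_iff)

lemma resultant_root_polys_nonzero_iff:
  "resultant (root_poly d) (root_poly e) \<noteq> 0 \<longleftrightarrow> (\<forall>i j. d i \<noteq> e j)"
  by (auto simp: resultant_root_poly_nonzero_iff poly_root_poly_eq_0_iff)

lemma root_poly_reindex:
  assumes "bij \<sigma>"
  shows "root_poly (d \<circ> \<sigma>) = root_poly d"
  unfolding root_poly_def comp_def by (rule prod.reindex_bij_betw[OF assms])

definition root_mult :: "('i::finite \<Rightarrow> complex) \<Rightarrow> complex \<Rightarrow> nat" where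
  "root_mult d x = card {i. d i = x}"

definition cofactor_poly :: "('i::finite \<Rightarrow> complex) \<Rightarrow> complex \<Rightarrow> complex poly" where
  "cofactor_poly d x = (\<Prod>i\<in>{i. d i \<noteq> x}. [:d i, -1:])"

text \<open>The terms with d i = x vanish, as 1 / 0 = 0.\<close>

definition inv_dist_sum :: "('i::finite \<Rightarrow> complex) \<Rightarrow> complex \<Rightarrow> complex" where
  "inv_dist_sum d x = (\<Sum>i\<in>UNIV. 1 / (d i - x))"

lemma root_poly_split_root: "root_poly d = [:x, -1:] ^ root_mult d x * cofactor_poly d x"
proof -
  have U: "UNIV = {i. d i = x} \<union> {i. d i \<noteq> x}"
    by auto
  have "root_poly d = (\<Prod>i\<in>{i. d i = x}. [:d i, -1:]) * cofactor_poly d x"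
    unfolding root_poly_def cofactor_poly_def by (subst U, subst prod.union_disjoint) auto
  also have "(\<Prod>i\<in>{i. d i = x}. [:d i, -1:]) = (\<Prod>i\<in>{i. d i = x}. [:x, -1:])"
    by (rule prod.cong) auto
  also have "\<dots> = [:x, -1:] ^ root_mult d x"
    unfolding root_mult_def by (rule prod_constant)
  finally show ?thesis .
qed

lemma root_mult_pos: "0 < root_mult d (d a)"
  unfolding root_mult_def by (auto simp: card_gt_0_iff)

lemma poly_cofactor_poly_nonzero: "poly (cofactor_poly d x) x \<noteq> 0"
  unfolding cofactor_poly_def by (simp add: poly_prod)

lemma poly_pderiv_cofactor_poly:
  "poly (pderiv (cofactor_poly d x)) x = - poly (cofactor_poly d x) x * inv_dist_sum d x"
proof -
  let ?S = "{i. d i \<noteq> x}"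
  have "poly (pderiv (cofactor_poly d x)) x = (\<Sum>a\<in>?S. - (\<Prod>j\<in>?S - {a}. d j - x))"
    unfolding cofactor_poly_def pderiv_prod by (simp add: poly_sum poly_prod pderiv_pCons)
  also have "\<dots> = (\<Sum>a\<in>?S. - poly (cofactor_poly d x) x * (1 / (d a - x)))"
  proof (rule sum.cong[OF refl])
    fix a assume a: "a \<in> ?S"
    then have "poly (cofactor_poly d x) x = (d a - x) * (\<Prod>j\<in>?S - {a}. d j - x)"
      unfolding cofactor_poly_def poly_prod by (simp add: prod.remove)
    then show "- (\<Prod>j\<in>?S - {a}. d j - x) = - poly (cofactor_poly d x) x * (1 / (d a - x))"
      using a by (simp add: field_simps)
  qed
  also have "\<dots> = - poly (cofactor_poly d x) x * inv_dist_sum d x"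
    unfolding inv_dist_sum_def sum_distrib_left[symmetric] by (simp add: sum.mono_neutral_left)
  finally show ?thesis .
qed

lemma pderiv_linear: "pderiv [:a, -1:] = (-1 :: 'a::idom poly)"
  by (rule poly_eqI) (simp add: pderiv_pCons coeff_pCons split: nat.split)

lemma poly_pderiv_linear_mult_at_root: "poly (pderiv ([:x, -1:] * h)) x = - poly h (x :: complex)"
  unfolding pderiv_mult pderiv_linear poly_add poly_mult by simp

lemma poly_pderiv2_linear_mult_at_root:
  "poly (pderiv (pderiv ([:x, -1:] * h))) x = - 2 * poly (pderiv h) (x :: complex)"
proof -
  have "pderiv ([:x, -1:] * h) = [:x, -1:] * pderiv h - h"
    unfolding pderiv_mult pderiv_linear by simp
  moreover have "pderiv ([:x, -1:] * pderiv h - h) = [:x, -1:] * pderiv (pderiv h) - pderiv h - pderiv h"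
    by (simp only: pderiv_diff pderiv_add pderiv_minus pderiv_mult pderiv_linear mult_minus1_right
        diff_conv_add_uminus)
  ultimately have "pderiv (pderiv ([:x, -1:] * h)) = [:x, -1:] * pderiv (pderiv h) - pderiv h - pderiv h"
    by (simp only:)
  then show ?thesis
    by simp
qed

lemma poly_pderiv_root_poly_eq_0_iff:
  "poly (pderiv (root_poly d)) (d a) = 0 \<longleftrightarrow> root_mult d (d a) \<noteq> 1"
proof -
  obtain k where k: "root_mult d (d a) = Suc k"
    using root_mult_pos[of d a] gr0_implies_Suc by blast
  have "poly (pderiv (root_poly d)) (d a) = - poly ([:d a, -1:] ^ k * cofactor_poly d (d a)) (d a)"
    unfolding root_poly_split_root[of d "d a"] k power_Suc mult.assoc
    by (rule poly_pderiv_linear_mult_at_root)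
  then show ?thesis
    using k poly_cofactor_poly_nonzero[of d "d a"] by (cases k) auto
qed

lemma resultant_root_poly_pderiv_nonzero_iff:
  "resultant (root_poly d) (pderiv (root_poly d)) \<noteq> 0 \<longleftrightarrow> inj d"
proof -
  have "inj d \<longleftrightarrow> (\<forall>a. root_mult d (d a) = 1)"
  proof
    assume "inj d"
    then have "{i. d i = d a} = {a}" for a
      by (auto dest: injD)
    then show "\<forall>a. root_mult d (d a) = 1"
      by (simp add: root_mult_def)
  next
    assume simple: "\<forall>a. root_mult d (d a) = 1"
    show "inj d"
    proof (rule injI)
      fix a b assume "d a = d b"
      then have "a \<in> {i. d i = d a}" "b \<in> {i. d i = d a}"
        by auto
      moreover have "card {i. d i = d a} = 1"
        using simple by (simp add: root_mult_def)
      then obtain z where "{i. d i = d a} = {z}"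
        by (rule card_1_singletonE)
      ultimately show "a = b"
        by (metis singletonD)
    qed
  qed
  then show ?thesis
    by (simp add: resultant_root_poly_nonzero_iff poly_pderiv_root_poly_eq_0_iff)
qed

text \<open>At a simple root x of p = (x - X) h one has p''(x) = -2 h'(x) = 2 h(x) inv_dist_sum d x.\<close>

definition double_or_simple_roots :: "('i::finite \<Rightarrow> complex) \<Rightarrow> bool" where
  "double_or_simple_roots d \<longleftrightarrow>
     (\<forall>a. root_mult d (d a) = 2 \<or> (root_mult d (d a) = 1 \<and> inv_dist_sum d (d a) \<noteq> 0))"

lemma poly_pderiv2_root_poly_nonzero_iff:
  "poly (pderiv (pderiv (root_poly d))) (d a) \<noteq> 0 \<longleftrightarrow>
     root_mult d (d a) = 2 \<or> (root_mult d (d a) = 1 \<and> inv_dist_sum d (d a) \<noteq> 0)"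
proof -
  let ?x = "d a" and ?h = "cofactor_poly d (d a)"
  obtain k where k: "root_mult d ?x = Suc k"
    using root_mult_pos[of d a] gr0_implies_Suc by blast
  have p2: "poly (pderiv (pderiv (root_poly d))) ?x = - 2 * poly (pderiv ([:?x, -1:] ^ k * ?h)) ?x"
    unfolding root_poly_split_root[of d ?x] k power_Suc mult.assoc
    by (rule poly_pderiv2_linear_mult_at_root)
  show ?thesis
  proof (cases k)
    case 0
    then show ?thesis
      using p2 k poly_cofactor_poly_nonzero[of d ?x] by (simp add: poly_pderiv_cofactor_poly)
  next
    case (Suc k')
    have "poly (pderiv ([:?x, -1:] ^ k * ?h)) ?x = - poly ([:?x, -1:] ^ k' * ?h) ?x"
      unfolding Suc power_Suc mult.assoc by (rule poly_pderiv_linear_mult_at_root)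
    then show ?thesis
      using p2 k Suc poly_cofactor_poly_nonzero[of d ?x] by (cases k') auto
  qed
qed

lemma resultant_root_poly_pderiv2_nonzero_iff:
  "resultant (root_poly d) (pderiv (pderiv (root_poly d))) \<noteq> 0 \<longleftrightarrow> double_or_simple_roots d"
  unfolding resultant_root_poly_nonzero_iff double_or_simple_roots_def
  using poly_pderiv2_root_poly_nonzero_iff by blast

section \<open>Perturbing sums of eigenvalues\<close>

lemma eventually_separates_first:
  fixes s :: "'a::finite \<Rightarrow> complex" and t :: "'b::finite \<Rightarrow> complex"
  assumes "inj s"
  shows "\<forall>\<^sub>F c in at_right (0::real). \<forall>a a' b b'. a \<noteq> a' \<longrightarrow> s a + of_real c * t b \<noteq> s a' + of_real c * t b'"
proof (intro eventually_all_finite)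
  fix a a' b b'
  show "\<forall>\<^sub>F c in at_right (0::real). a \<noteq> a' \<longrightarrow> s a + of_real c * t b \<noteq> s a' + of_real c * t b'"
  proof (cases "a = a'")
    case False
    have "((\<lambda>c::real. (s a + of_real c * t b) - (s a' + of_real c * t b')) \<longlongrightarrow> s a - s a') (at_right 0)"
      by (auto intro!: tendsto_eq_intros)
    moreover have "s a - s a' \<noteq> 0"
      using False assms by (auto dest: injD)
    ultimately have "\<forall>\<^sub>F c in at_right (0::real). (s a + of_real c * t b) - (s a' + of_real c * t b') \<noteq> 0"
      by (rule tendsto_imp_eventually_ne)
    then show ?thesis
      by (rule eventually_mono) auto
  qed simp
qed

lemma fiber_perturbed_sum:
  fixes s :: "'a::finite \<Rightarrow> complex" and t :: "'b::finite \<Rightarrow> complex"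
  assumes sep: "\<forall>a a' b b'. a \<noteq> a' \<longrightarrow> s a + of_real c * t b \<noteq> s a' + of_real c * t b'" and "c \<noteq> 0"
  shows "{q. s (fst q) + of_real c * t (snd q) = s a0 + of_real c * t b0} = {a0} \<times> {b. t b = t b0}"
proof (intro Set.set_eqI iffI)
  fix q assume "q \<in> {q. s (fst q) + of_real c * t (snd q) = s a0 + of_real c * t b0}"
  then have eq: "s (fst q) + of_real c * t (snd q) = s a0 + of_real c * t b0"
    by simp
  then have "fst q = a0"
    using sep by blast
  then show "q \<in> {a0} \<times> {b. t b = t b0}"
    using eq assms(2) by (auto simp: mem_Times_iff)
qed (auto simp: mem_Times_iff)

lemma inj_perturbed_sum:
  fixes s :: "'a::finite \<Rightarrow> complex" and t :: "'b::finite \<Rightarrow> complex"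
  assumes s: "inj s" and t: "inj t"
  shows "\<exists>c>0. inj (\<lambda>p. s (fst p) + of_real c * t (snd p))"
proof -
  obtain c :: real where c: "0 < c"
    and sep: "\<forall>a a' b b'. a \<noteq> a' \<longrightarrow> s a + of_real c * t b \<noteq> s a' + of_real c * t b'"
    using eventually_happens'[OF _ eventually_conj[OF eventually_at_right_less eventually_separates_first[OF s, where t = t]]]
    by auto
  have "inj (\<lambda>p. s (fst p) + of_real c * t (snd p))"
  proof (rule injI)
    fix p q :: "'a \<times> 'b"
    assume "s (fst p) + of_real c * t (snd p) = s (fst q) + of_real c * t (snd q)"
    then have "p \<in> {fst q} \<times> {b. t b = t (snd q)}"
      using fiber_perturbed_sum[OF sep, of "fst q" "snd q"] c by auto
    then show "p = q"
      using t by (auto simp: prod_eq_iff dest: injD)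
  qed
  then show ?thesis
    using c by blast
qed

definition cross_inv_dist_sum ::
    "('a::finite \<Rightarrow> complex) \<Rightarrow> ('b::finite \<Rightarrow> complex) \<Rightarrow> real \<Rightarrow> 'a \<Rightarrow> 'b \<Rightarrow> complex" where
  "cross_inv_dist_sum s t c a0 b0 = (\<Sum>a\<in>UNIV - {a0}. \<Sum>b\<in>UNIV. 1 / (s a - s a0 + of_real c * (t b - t b0)))"

lemma inv_dist_sum_perturbed_sum:
  fixes s :: "'a::finite \<Rightarrow> complex" and t :: "'b::finite \<Rightarrow> complex"
  assumes "c \<noteq> 0"
  shows "inv_dist_sum (\<lambda>p. s (fst p) + of_real c * t (snd p)) (s a0 + of_real c * t b0)
    = (1 / of_real c) * (inv_dist_sum t (t b0) + of_real c * cross_inv_dist_sum s t c a0 b0)"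
proof -
  have "inv_dist_sum (\<lambda>p. s (fst p) + of_real c * t (snd p)) (s a0 + of_real c * t b0)
      = (\<Sum>a\<in>UNIV. \<Sum>b\<in>UNIV. 1 / (s a - s a0 + of_real c * (t b - t b0)))"
    unfolding inv_dist_sum_def sum_UNIV_prod_type by (simp add: algebra_simps)
  also have "\<dots> = (\<Sum>b\<in>UNIV. 1 / (of_real c * (t b - t b0))) + cross_inv_dist_sum s t c a0 b0"
    unfolding cross_inv_dist_sum_def by (subst sum.remove[of UNIV a0]) auto
  also have "(\<Sum>b\<in>UNIV. 1 / (of_real c * (t b - t b0))) = (1 / of_real c) * inv_dist_sum t (t b0)"
    unfolding inv_dist_sum_def sum_distrib_left by (rule sum.cong) auto
  finally show ?thesis
    using assms by (simp add: distrib_left)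
qed

lemma eventually_cross_inv_dist_sum_small:
  fixes s :: "'a::finite \<Rightarrow> complex" and t :: "'b::finite \<Rightarrow> complex"
  assumes s: "inj s"
  shows "\<forall>\<^sub>F c in at_right (0::real). \<forall>a0 b0. inv_dist_sum t (t b0) \<noteq> 0 \<longrightarrow>
           inv_dist_sum t (t b0) + of_real c * cross_inv_dist_sum s t c a0 b0 \<noteq> 0"
proof (intro eventually_all_finite)
  fix a0 b0
  show "\<forall>\<^sub>F c in at_right (0::real). inv_dist_sum t (t b0) \<noteq> 0 \<longrightarrow>
          inv_dist_sum t (t b0) + of_real c * cross_inv_dist_sum s t c a0 b0 \<noteq> 0"
  proof (cases "inv_dist_sum t (t b0) = 0")
    case False
    have nonzero: "s a - s a0 + of_real 0 * (t b - t b0) \<noteq> 0" if "a \<in> UNIV - {a0}" for a b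
      using that s by (auto dest: injD)
    have "((\<lambda>c::real. inv_dist_sum t (t b0) + of_real c * cross_inv_dist_sum s t c a0 b0)
        \<longlongrightarrow> inv_dist_sum t (t b0) + of_real 0 * cross_inv_dist_sum s t 0 a0 b0) (at_right 0)"
      unfolding cross_inv_dist_sum_def
      by (intro tendsto_intros tendsto_divide tendsto_add tendsto_mult tendsto_of_real tendsto_ident_at nonzero) auto
    then have "\<forall>\<^sub>F c in at_right (0::real). inv_dist_sum t (t b0) + of_real c * cross_inv_dist_sum s t c a0 b0 \<noteq> 0"
      using False by (intro tendsto_imp_eventually_ne) auto
    then show ?thesis
      by (rule eventually_mono) auto
  qed simp
qed

lemma double_or_simple_roots_perturbed_sum:
  fixes s :: "'a::finite \<Rightarrow> complex" and t :: "'b::finite \<Rightarrow> complex"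
  assumes s: "inj s" and t: "double_or_simple_roots t"
  shows "\<exists>c>0. double_or_simple_roots (\<lambda>p. s (fst p) + of_real c * t (snd p))"
proof -
  obtain c :: real where c: "0 < c"
    and sep: "\<forall>a a' b b'. a \<noteq> a' \<longrightarrow> s a + of_real c * t b \<noteq> s a' + of_real c * t b'"
    and small: "\<forall>a0 b0. inv_dist_sum t (t b0) \<noteq> 0 \<longrightarrow>
                  inv_dist_sum t (t b0) + of_real c * cross_inv_dist_sum s t c a0 b0 \<noteq> 0"
    using eventually_happens'[OF _ eventually_conj[OF eventually_at_right_less
          eventually_conj[OF eventually_separates_first[OF s, where t = t] eventually_cross_inv_dist_sum_small[OF s, where t = t]]]]
    by auto
  define r where "r p = s (fst p) + of_real c * t (snd p)" for p
  have "root_mult r (r p) = 2 \<or> (root_mult r (r p) = 1 \<and> inv_dist_sum r (r p) \<noteq> 0)" for p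
  proof -
    obtain a0 b0 where p: "p = (a0, b0)"
      by fastforce
    have mult: "root_mult r (r p) = root_mult t (t b0)"
      using fiber_perturbed_sum[OF sep, of a0 b0] c
      unfolding root_mult_def r_def p by (simp add: card_cartesian_product)
    have sum: "inv_dist_sum r (r p)
        = (1 / of_real c) * (inv_dist_sum t (t b0) + of_real c * cross_inv_dist_sum s t c a0 b0)"
      unfolding r_def p using c by (simp add: inv_dist_sum_perturbed_sum)
    from t have "root_mult t (t b0) = 2 \<or> (root_mult t (t b0) = 1 \<and> inv_dist_sum t (t b0) \<noteq> 0)"
      unfolding double_or_simple_roots_def by blast
    then show ?thesis
    proof
      assume simple: "root_mult t (t b0) = 1 \<and> inv_dist_sum t (t b0) \<noteq> 0"
      then have "inv_dist_sum t (t b0) + of_real c * cross_inv_dist_sum s t c a0 b0 \<noteq> 0"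
        using small by blast
      then have "inv_dist_sum r (r p) \<noteq> 0"
        unfolding sum using c by (intro no_zero_divisors) auto
      then show ?thesis
        using simple mult by simp
    qed (simp add: mult)
  qed
  then have "double_or_simple_roots r"
    unfolding double_or_simple_roots_def by blast
  then show ?thesis
    using c unfolding r_def by blast
qed

lemma p_V_tensor_rep_sym2_pair:
  fixes \<rho> :: "complex^'n^'n \<Rightarrow> complex^'m^'m" and \<rho>' :: "complex^'p^'p \<Rightarrow> complex^'q^'q"
  assumes "is_rep G \<rho>" "is_rep G' \<rho>'" "compact_lie_group G" "compact_lie_group G'"
    and "sym2_elem G s" "sym2_elem G' s'"
  obtains d1 :: "'m \<Rightarrow> complex" and d2 :: "'q \<Rightarrow> complex"
  where "p_V \<rho> s = root_poly d1" "p_V \<rho>' s' = root_poly d2"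
    "\<And>c c'. p_V (tensor_rep \<rho> \<rho>') (sym2_pair c s c' s')
       = root_poly (\<lambda>p. of_real c * d1 (fst p) + of_real c' * d2 (snd p))"
proof -
  obtain d1 :: "'m \<Rightarrow> complex" and d2 :: "'q \<Rightarrow> complex" where "char_pol (D_op \<rho> s) = root_poly d1" "char_pol (D_op \<rho>' s') = root_poly d2"
    "\<And>c c'. char_pol (c *\<^sub>R kron (D_op \<rho> s) (mat 1) + c' *\<^sub>R kron (mat 1) (D_op \<rho>' s'))
       = root_poly (\<lambda>p. of_real c * d1 (fst p) + of_real c' * d2 (snd p))"
    using char_pol_kron_sum by blast
  then show ?thesis
    by (intro that) (simp_all add: p_V_def D_op_tensor_rep_sym2_pair[OF assms])
qed

lemma a_nonzero_tensor_rep_left: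
  fixes \<rho>V :: "complex^'n^'n \<Rightarrow> complex^'m^'m" and \<rho>W :: "complex^'n^'n \<Rightarrow> complex^'k^'k"
    and \<rho>V' :: "complex^'p^'p \<Rightarrow> complex^'q^'q" and \<rho>W' :: "complex^'p^'p \<Rightarrow> complex^'l^'l"
  assumes rep: "is_rep G \<rho>V" "is_rep G \<rho>W" "is_rep G' \<rho>V'" "is_rep G' \<rho>W'"
    and G: "compact_lie_group G" "compact_lie_group G'" and "a_nonzero G \<rho>V \<rho>W"
  shows "a_nonzero (prod_group G G') (tensor_rep \<rho>V \<rho>V') (tensor_rep \<rho>W \<rho>W')"
proof -
  obtain s where s: "sym2_elem G s" and res: "resultant (p_V \<rho>V s) (p_V \<rho>W s) \<noteq> 0"
    using assms(7) unfolding a_nonzero_def by blast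
  have nil: "sym2_elem G' []"
    by (simp add: sym2_elem_def)
  obtain d1 :: "'m \<Rightarrow> complex" and d2 :: "'q \<Rightarrow> complex" where d1: "p_V \<rho>V s = root_poly d1" and "p_V \<rho>V' [] = root_poly d2"
    and d: "\<And>c c'. p_V (tensor_rep \<rho>V \<rho>V') (sym2_pair c s c' [])
      = root_poly (\<lambda>p. of_real c * d1 (fst p) + of_real c' * d2 (snd p))"
    using p_V_tensor_rep_sym2_pair[OF rep(1,3) G s nil] by blast
  obtain e1 :: "'k \<Rightarrow> complex" and e2 :: "'l \<Rightarrow> complex" where e1: "p_V \<rho>W s = root_poly e1" and "p_V \<rho>W' [] = root_poly e2"
    and e: "\<And>c c'. p_V (tensor_rep \<rho>W \<rho>W') (sym2_pair c s c' [])
      = root_poly (\<lambda>p. of_real c * e1 (fst p) + of_real c' * e2 (snd p))"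
    using p_V_tensor_rep_sym2_pair[OF rep(2,4) G s nil] by blast
  have "\<forall>i j. d1 i \<noteq> e1 j"
    using res by (simp add: d1 e1 resultant_root_polys_nonzero_iff)
  then have "resultant (p_V (tensor_rep \<rho>V \<rho>V') (sym2_pair 1 s 0 []))
      (p_V (tensor_rep \<rho>W \<rho>W') (sym2_pair 1 s 0 [])) \<noteq> 0"
    by (simp add: d e resultant_root_polys_nonzero_iff)
  then show ?thesis
    unfolding a_nonzero_def using sym2_elem_sym2_pair[OF G s nil] by blast
qed

lemma a_nonzero_tensor_rep_right:
  fixes \<rho>V :: "complex^'n^'n \<Rightarrow> complex^'m^'m" and \<rho>W :: "complex^'n^'n \<Rightarrow> complex^'k^'k"
    and \<rho>V' :: "complex^'p^'p \<Rightarrow> complex^'q^'q" and \<rho>W' :: "complex^'p^'p \<Rightarrow> complex^'l^'l"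
  assumes rep: "is_rep G \<rho>V" "is_rep G \<rho>W" "is_rep G' \<rho>V'" "is_rep G' \<rho>W'"
    and G: "compact_lie_group G" "compact_lie_group G'" and "a_nonzero G' \<rho>V' \<rho>W'"
  shows "a_nonzero (prod_group G G') (tensor_rep \<rho>V \<rho>V') (tensor_rep \<rho>W \<rho>W')"
proof -
  obtain s' where s': "sym2_elem G' s'" and res: "resultant (p_V \<rho>V' s') (p_V \<rho>W' s') \<noteq> 0"
    using assms(7) unfolding a_nonzero_def by blast
  have nil: "sym2_elem G []"
    by (simp add: sym2_elem_def)
  obtain d1 :: "'m \<Rightarrow> complex" and d2 :: "'q \<Rightarrow> complex" where "p_V \<rho>V [] = root_poly d1" and d2: "p_V \<rho>V' s' = root_poly d2"
    and d: "\<And>c c'. p_V (tensor_rep \<rho>V \<rho>V') (sym2_pair c [] c' s')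
      = root_poly (\<lambda>p. of_real c * d1 (fst p) + of_real c' * d2 (snd p))"
    using p_V_tensor_rep_sym2_pair[OF rep(1,3) G nil s'] by blast
  obtain e1 :: "'k \<Rightarrow> complex" and e2 :: "'l \<Rightarrow> complex" where "p_V \<rho>W [] = root_poly e1" and e2: "p_V \<rho>W' s' = root_poly e2"
    and e: "\<And>c c'. p_V (tensor_rep \<rho>W \<rho>W') (sym2_pair c [] c' s')
      = root_poly (\<lambda>p. of_real c * e1 (fst p) + of_real c' * e2 (snd p))"
    using p_V_tensor_rep_sym2_pair[OF rep(2,4) G nil s'] by blast
  have "\<forall>i j. d2 i \<noteq> e2 j"
    using res by (simp add: d2 e2 resultant_root_polys_nonzero_iff)
  then have "resultant (p_V (tensor_rep \<rho>V \<rho>V') (sym2_pair 0 [] 1 s'))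
      (p_V (tensor_rep \<rho>W \<rho>W') (sym2_pair 0 [] 1 s')) \<noteq> 0"
    by (simp add: d e resultant_root_polys_nonzero_iff)
  then show ?thesis
    unfolding a_nonzero_def using sym2_elem_sym2_pair[OF G nil s'] by blast
qed

lemma b_nonzero_tensor_rep:
  fixes \<rho> :: "complex^'n^'n \<Rightarrow> complex^'m^'m" and \<rho>' :: "complex^'p^'p \<Rightarrow> complex^'q^'q"
  assumes rep: "is_rep G \<rho>" "is_rep G' \<rho>'" and G: "compact_lie_group G" "compact_lie_group G'"
    and "b_nonzero G \<rho>" "b_nonzero G' \<rho>'"
  shows "b_nonzero (prod_group G G') (tensor_rep \<rho> \<rho>')"
proof -
  obtain s s' where s: "sym2_elem G s" "sym2_elem G' s'"
    and res: "resultant (p_V \<rho> s) (pderiv (p_V \<rho> s)) \<noteq> 0" "resultant (p_V \<rho>' s') (pderiv (p_V \<rho>' s')) \<noteq> 0"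
    using assms(5,6) unfolding b_nonzero_def by blast
  obtain d1 :: "'m \<Rightarrow> complex" and d2 :: "'q \<Rightarrow> complex" where d1: "p_V \<rho> s = root_poly d1" and d2: "p_V \<rho>' s' = root_poly d2"
    and d: "\<And>c c'. p_V (tensor_rep \<rho> \<rho>') (sym2_pair c s c' s')
      = root_poly (\<lambda>p. of_real c * d1 (fst p) + of_real c' * d2 (snd p))"
    using p_V_tensor_rep_sym2_pair[OF rep G s] by blast
  have "inj d1" "inj d2"
    using res unfolding d1 d2 resultant_root_poly_pderiv_nonzero_iff by auto
  then obtain c where "inj (\<lambda>p. d1 (fst p) + of_real c * d2 (snd p))"
    using inj_perturbed_sum by blast
  then have "resultant (p_V (tensor_rep \<rho> \<rho>') (sym2_pair 1 s c s'))
      (pderiv (p_V (tensor_rep \<rho> \<rho>') (sym2_pair 1 s c s'))) \<noteq> 0"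
    by (simp add: d resultant_root_poly_pderiv_nonzero_iff)
  then show ?thesis
    unfolding b_nonzero_def using sym2_elem_sym2_pair[OF G s] by blast
qed

lemma c_nonzero_tensor_rep_left:
  fixes \<rho> :: "complex^'n^'n \<Rightarrow> complex^'m^'m" and \<rho>' :: "complex^'p^'p \<Rightarrow> complex^'q^'q"
  assumes rep: "is_rep G \<rho>" "is_rep G' \<rho>'" and G: "compact_lie_group G" "compact_lie_group G'"
    and "b_nonzero G \<rho>" "c_nonzero G' \<rho>'"
  shows "c_nonzero (prod_group G G') (tensor_rep \<rho> \<rho>')"
proof -
  obtain s s' where s: "sym2_elem G s" "sym2_elem G' s'"
    and res: "resultant (p_V \<rho> s) (pderiv (p_V \<rho> s)) \<noteq> 0"
      "resultant (p_V \<rho>' s') (pderiv (pderiv (p_V \<rho>' s'))) \<noteq> 0"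
    using assms(5,6) unfolding b_nonzero_def c_nonzero_def by blast
  obtain d1 :: "'m \<Rightarrow> complex" and d2 :: "'q \<Rightarrow> complex" where d1: "p_V \<rho> s = root_poly d1" and d2: "p_V \<rho>' s' = root_poly d2"
    and d: "\<And>c c'. p_V (tensor_rep \<rho> \<rho>') (sym2_pair c s c' s')
      = root_poly (\<lambda>p. of_real c * d1 (fst p) + of_real c' * d2 (snd p))"
    using p_V_tensor_rep_sym2_pair[OF rep G s] by blast
  have "inj d1" "double_or_simple_roots d2"
    using res unfolding d1 d2 resultant_root_poly_pderiv_nonzero_iff resultant_root_poly_pderiv2_nonzero_iff
    by auto
  then obtain c where "double_or_simple_roots (\<lambda>p. d1 (fst p) + of_real c * d2 (snd p))"
    using double_or_simple_roots_perturbed_sum by blast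
  then have "resultant (p_V (tensor_rep \<rho> \<rho>') (sym2_pair 1 s c s'))
      (pderiv (pderiv (p_V (tensor_rep \<rho> \<rho>') (sym2_pair 1 s c s')))) \<noteq> 0"
    by (simp add: d resultant_root_poly_pderiv2_nonzero_iff)
  then show ?thesis
    unfolding c_nonzero_def using sym2_elem_sym2_pair[OF G s] by blast
qed

lemma c_nonzero_tensor_rep_right:
  fixes \<rho> :: "complex^'n^'n \<Rightarrow> complex^'m^'m" and \<rho>' :: "complex^'p^'p \<Rightarrow> complex^'q^'q"
  assumes rep: "is_rep G \<rho>" "is_rep G' \<rho>'" and G: "compact_lie_group G" "compact_lie_group G'"
    and "c_nonzero G \<rho>" "b_nonzero G' \<rho>'"
  shows "c_nonzero (prod_group G G') (tensor_rep \<rho> \<rho>')"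
proof -
  obtain s s' where s: "sym2_elem G s" "sym2_elem G' s'"
    and res: "resultant (p_V \<rho> s) (pderiv (pderiv (p_V \<rho> s))) \<noteq> 0"
      "resultant (p_V \<rho>' s') (pderiv (p_V \<rho>' s')) \<noteq> 0"
    using assms(5,6) unfolding b_nonzero_def c_nonzero_def by blast
  obtain d1 :: "'m \<Rightarrow> complex" and d2 :: "'q \<Rightarrow> complex" where d1: "p_V \<rho> s = root_poly d1" and d2: "p_V \<rho>' s' = root_poly d2"
    and d: "\<And>c c'. p_V (tensor_rep \<rho> \<rho>') (sym2_pair c s c' s')
      = root_poly (\<lambda>p. of_real c * d1 (fst p) + of_real c' * d2 (snd p))"
    using p_V_tensor_rep_sym2_pair[OF rep G s] by blast
  have "double_or_simple_roots d1" "inj d2"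
    using res unfolding d1 d2 resultant_root_poly_pderiv_nonzero_iff resultant_root_poly_pderiv2_nonzero_iff
    by auto
  then obtain c where "double_or_simple_roots (\<lambda>q. d2 (fst q) + of_real c * d1 (snd q))"
    using double_or_simple_roots_perturbed_sum by blast
  moreover have "p_V (tensor_rep \<rho> \<rho>') (sym2_pair c s 1 s') = root_poly (\<lambda>q. d2 (fst q) + of_real c * d1 (snd q))"
    using root_poly_reindex[of prod.swap "\<lambda>q. d2 (fst q) + of_real c * d1 (snd q)"]
    by (simp add: d o_def add.commute)
  ultimately have "resultant (p_V (tensor_rep \<rho> \<rho>') (sym2_pair c s 1 s'))
      (pderiv (pderiv (p_V (tensor_rep \<rho> \<rho>') (sym2_pair c s 1 s')))) \<noteq> 0"
    by (simp add: resultant_root_poly_pderiv2_nonzero_iff)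
  then show ?thesis
    unfolding c_nonzero_def using sym2_elem_sym2_pair[OF G s] by blast
qed

theorem lemma4p4:
  fixes G :: "(complex^'n^'n) set" and G' :: "(complex^'p^'p) set"
    and \<rho>V :: "complex^'n^'n \<Rightarrow> complex^'m^'m"
    and \<rho>W :: "complex^'n^'n \<Rightarrow> complex^'k^'k"
    and \<rho>V' :: "complex^'p^'p \<Rightarrow> complex^'q^'q"
    and \<rho>W' :: "complex^'p^'p \<Rightarrow> complex^'l^'l"
  assumes "compact_lie_group G" and "compact_lie_group G'"
    and "irreducible_rep G \<rho>V" and "irreducible_rep G \<rho>W"
    and "irreducible_rep G' \<rho>V'" and "irreducible_rep G' \<rho>W'"
  shows "((a_nonzero G \<rho>V \<rho>W \<or> a_nonzero G' \<rho>V' \<rho>W') \<longrightarrow>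
           a_nonzero (prod_group G G') (tensor_rep \<rho>V \<rho>V') (tensor_rep \<rho>W \<rho>W'))
    \<and> (b_nonzero G \<rho>V \<and> b_nonzero G' \<rho>V' \<longrightarrow>
           b_nonzero (prod_group G G') (tensor_rep \<rho>V \<rho>V'))
    \<and> (((real_type G \<rho>V \<and> b_nonzero G \<rho>V \<and> quaternionic_type G' \<rho>V' \<and> c_nonzero G' \<rho>V')
         \<or> (quaternionic_type G \<rho>V \<and> c_nonzero G \<rho>V \<and> real_type G' \<rho>V' \<and> b_nonzero G' \<rho>V')
         \<longrightarrow> c_nonzero (prod_group G G') (tensor_rep \<rho>V \<rho>V')))"
proof -
  have rep: "is_rep G \<rho>V" "is_rep G \<rho>W" "is_rep G' \<rho>V'" "is_rep G' \<rho>W'"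
    using assms(3-6) by (auto simp: irreducible_rep_def)
  show ?thesis
    using a_nonzero_tensor_rep_left[OF rep assms(1,2)] a_nonzero_tensor_rep_right[OF rep assms(1,2)]
      b_nonzero_tensor_rep[OF rep(1,3) assms(1,2)]
      c_nonzero_tensor_rep_left[OF rep(1,3) assms(1,2)] c_nonzero_tensor_rep_right[OF rep(1,3) assms(1,2)]
    by blast
qed

end
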